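(* Let $G$ be a compact abelian group with normalized Haar measure $\mu$, and let $f\in\mathbb{Z}[\widehat{G}]$. If $\mu(\{x\in G: f(x)=0\})=0$, then $\mathsf{m}_G(f)\ge0$.
   Context: $\widehat{G}$ is the (multiplicative) dual group of characters of $G$, and $\mathbb{Z}[\widehat{G}]$ is the ring of integral linear combinations of characters, regarded as functions on $G$. For $f\in\mathbb{Z}[\widehat{G}]$, the logarithmic Mahler measure is $\mathsf{m}_G(f)=\int_G\log|f|\,d\mu$ (with $\log 0=-\infty$). *)

theory Defs
  imports "HOL-Analysis.Analysis" "HOL-Probability.Probability"
begin

text \<open>A (Hausdorff) compact abelian group is modelled by a type of class
  topological_ab_group_add and t2_space with compact UNIV (written additively).\<close>

definition normalized_haar :: "'a::topological_ab_group_add measure \<Rightarrow> bool" where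
  "normalized_haar M \<longleftrightarrow>
     space M = UNIV \<and> sets M = sets borel \<and> prob_space M \<and>
     (\<forall>a. \<forall>A \<in> sets borel. emeasure M ((\<lambda>x. a + x) ` A) = emeasure M A) \<and>
     (\<forall>A \<in> sets borel. emeasure M A = (SUP K \<in> {K. compact K \<and> K \<subseteq> A}. emeasure M K))"

definition character :: "('a::topological_ab_group_add \<Rightarrow> complex) \<Rightarrow> bool" where
  "character ch \<longleftrightarrow> continuous_on UNIV ch \<and>
     (\<forall>x y. ch (x + y) = ch x * ch y) \<and> (\<forall>x. cmod (ch x) = 1)"

text \<open>Elements of Z[G^]: integral linear combinations of characters, as functions on G.\<close>
definition int_char_poly :: "('a::topological_ab_group_add \<Rightarrow> complex) \<Rightarrow> bool" where
  "int_char_poly f \<longleftrightarrow> (\<exists>S c. finite S \<and> (\<forall>ch\<in>S. character ch) \<and>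
     f = (\<lambda>x. \<Sum>ch\<in>S. of_int (c ch) * ch x))"

text \<open>Logarithmic Mahler measure in the extended reals, with log 0 = -infinity:
  integral of the positive part of log|f| minus integral of the negative part.\<close>
definition mahler_m :: "'a measure \<Rightarrow> ('a \<Rightarrow> complex) \<Rightarrow> ereal" where
  "mahler_m M f =
     enn2ereal (\<integral>\<^sup>+ x. (if f x = 0 then 0 else ennreal (max 0 (ln (cmod (f x))))) \<partial>M)
   - enn2ereal (\<integral>\<^sup>+ x. (if f x = 0 then \<infinity> else ennreal (max 0 (- ln (cmod (f x))))) \<partial>M)"

end

theory Submission
  imports Defs "Jordan_Normal_Form.Schur_Decomposition"
begin

text \<open>Write \<open>H = \<bar>f\<bar>\<^sup>2 = (\<Sum>ch. c ch * ch) * (\<Sum>ps. c ps * cnj ps)\<close>. On the span of the box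
  \<open>B\<^sub>n\<close> of characters \<open>\<Prod>ch. ch ^ g ch\<close> with \<open>\<bar>g ch\<bar> \<le> n\<close>, multiplication by \<open>H\<close> compresses to an
  integer matrix \<open>T\<^sub>n\<close> with \<open>0 \<le> T\<^sub>n \<le> max H\<close>. Its characteristic polynomial has integer
  coefficients, so the product of its nonzero eigenvalues is at least \<open>1\<close>; and since the boxes
  form a Folner sequence, \<open>trace (T\<^sub>n ^ k) = card B\<^sub>n * \<integral> H ^ k + o (card B\<^sub>n)\<close>. Bounding
  \<open>ln (t + \<epsilon>)\<close> and the indicator of \<open>t = 0\<close> from above by polynomials and evaluating on the
  spectrum (Szego's argument) gives \<open>\<integral> ln (H + \<epsilon>) \<ge> ln \<epsilon> * \<mu> {H = 0} = 0\<close>, and letting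
  \<open>\<epsilon> \<rightarrow> 0\<close> by monotone convergence yields \<open>m\<^sub>G f = \<integral> ln H / 2 \<ge> 0\<close>.\<close>

section \<open>Spectra of bounded positive semidefinite integer matrices\<close>

definition mat_trace :: "'a::comm_ring_1 mat \<Rightarrow> 'a" where
  "mat_trace A = (\<Sum>i<dim_row A. A $$ (i,i))"

lemma mat_trace_mult_comm:
  assumes A: "A \<in> carrier_mat n m" and B: "B \<in> carrier_mat m n"
  shows "mat_trace (A * B) = mat_trace (B * A)"
proof -
  have "mat_trace (A * B) = (\<Sum>i<n. \<Sum>j<m. A $$ (i,j) * B $$ (j,i))"
    using A B unfolding mat_trace_def
    by (intro sum.cong) (auto simp: scalar_prod_def atLeast0LessThan intro!: sum.cong)
  also have "\<dots> = (\<Sum>j<m. \<Sum>i<n. B $$ (j,i) * A $$ (i,j))"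
    by (subst sum.swap) (simp add: mult.commute)
  also have "\<dots> = mat_trace (B * A)"
    using A B unfolding mat_trace_def
    by (intro sum.cong) (auto simp: scalar_prod_def atLeast0LessThan intro!: sum.cong)
  finally show ?thesis .
qed

lemma index_mult_mat_square:
  assumes "A \<in> carrier_mat n n" "B \<in> carrier_mat n n" "i < n" "j < n"
  shows "(A * B) $$ (i,j) = (\<Sum>l<n. A $$ (i,l) * B $$ (l,j))"
  using assms by (auto simp: scalar_prod_def atLeast0LessThan intro!: sum.cong)

lemma upper_triangular_mult:
  assumes A: "A \<in> carrier_mat n n" and B: "B \<in> carrier_mat n n"
    and uA: "upper_triangular A" and uB: "upper_triangular B"
  shows "upper_triangular (A * B)"
    and "i < n \<Longrightarrow> (A * B) $$ (i,i) = A $$ (i,i) * B $$ (i,i)"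
proof -
  have vanish: "A $$ (i,l) * B $$ (l,j) = 0" if "i < n" "l < n" "j < i \<or> (j = i \<and> l \<noteq> i)" for i j l
    using that upper_triangularD[OF uA, of l i] upper_triangularD[OF uB, of j l] A B
    by (cases "l < i") auto
  show "upper_triangular (A * B)"
  proof
    fix i j assume ji: "j < i" and i: "i < dim_row (A * B)"
    have "(A * B) $$ (i,j) = (\<Sum>l<n. A $$ (i,l) * B $$ (l,j))"
      by (rule index_mult_mat_square) (use A B ji i in auto)
    also have "\<dots> = 0"
      using A i ji vanish by (intro sum.neutral) auto
    finally show "(A * B) $$ (i,j) = 0" .
  qed
  assume i: "i < n"
  have "(A * B) $$ (i,i) = (\<Sum>l<n. A $$ (i,l) * B $$ (l,i))"
    by (rule index_mult_mat_square[OF A B i i])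
  also have "\<dots> = A $$ (i,i) * B $$ (i,i)"
    using i vanish[of i _ i] by (subst sum.remove[of _ i]) (auto intro!: sum.neutral)
  finally show "(A * B) $$ (i,i) = A $$ (i,i) * B $$ (i,i)" .
qed

lemma upper_triangular_power:
  assumes A: "A \<in> carrier_mat n n" and uA: "upper_triangular A"
  shows "upper_triangular (A ^\<^sub>m k)" and "i < n \<Longrightarrow> (A ^\<^sub>m k) $$ (i,i) = A $$ (i,i) ^ k"
proof -
  have "upper_triangular (A ^\<^sub>m k) \<and> (\<forall>i<n. (A ^\<^sub>m k) $$ (i,i) = A $$ (i,i) ^ k)"
  proof (induction k)
    case (Suc k)
    have "A ^\<^sub>m k \<in> carrier_mat n n" using A by simp
    from upper_triangular_mult[OF this A] Suc uA show ?case
      by (simp del: power_Suc add: power_Suc2)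
  qed (use A in auto)
  then show "upper_triangular (A ^\<^sub>m k)" and "i < n \<Longrightarrow> (A ^\<^sub>m k) $$ (i,i) = A $$ (i,i) ^ k"
    by auto
qed

lemma mat_trace_power_eq_sum_roots:
  fixes A :: "'a::conjugatable_ordered_field mat"
  assumes A: "A \<in> carrier_mat n n" and cp: "char_poly A = (\<Prod>c\<leftarrow>cs. [:-c, 1:])"
  shows "mat_trace (A ^\<^sub>m k) = (\<Sum>c\<leftarrow>cs. c ^ k)"
proof -
  obtain U P Q where "schur_decomposition A cs = (U, P, Q)"
    by (cases "schur_decomposition A cs") auto
  from schur_decomposition[OF A cp this]
  have sim: "similar_mat_wit A U P Q" and ut: "upper_triangular U" and dg: "diag_mat U = cs"
    by auto
  from sim A have U: "U \<in> carrier_mat n n" and P: "P \<in> carrier_mat n n"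
    and Q: "Q \<in> carrier_mat n n" and QP: "Q * P = 1\<^sub>m n"
    unfolding similar_mat_wit_def Let_def by auto
  have "mat_trace (A ^\<^sub>m k) = mat_trace ((P * U ^\<^sub>m k) * Q)"
    by (simp add: similar_mat_wit_pow_id[OF sim])
  also have "\<dots> = mat_trace (Q * (P * U ^\<^sub>m k))"
    by (rule mat_trace_mult_comm[of _ n n]) (use P U Q in auto)
  also have "Q * (P * U ^\<^sub>m k) = U ^\<^sub>m k"
    using P U Q QP by (simp add: assoc_mult_mat[symmetric, of Q n n P n "U ^\<^sub>m k" n])
  also have "mat_trace (U ^\<^sub>m k) = (\<Sum>i<n. U $$ (i,i) ^ k)"
    unfolding mat_trace_def using upper_triangular_power(2)[OF U ut] U by simp
  also have "\<dots> = (\<Sum>c\<leftarrow>cs. c ^ k)"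
    using dg U unfolding diag_mat_def
    by (auto simp: o_def sum_list_sum_nth atLeast0LessThan)
  finally show ?thesis .
qed

lemma coeff_prod_linear_factors_lowest:
  fixes cs :: "'a::comm_ring_1 list"
  shows "coeff (\<Prod>c\<leftarrow>cs. [:-c, 1:]) (length (filter (\<lambda>c. c = 0) cs))
     = (\<Prod>c\<leftarrow>filter (\<lambda>c. c \<noteq> 0) cs. - c)"
proof -
  let ?z = "length (filter (\<lambda>c. c = 0) cs)"
  let ?R = "\<Prod>c\<leftarrow>filter (\<lambda>c. c \<noteq> 0) cs. [:-c, 1:]"
  have "(\<Prod>c\<leftarrow>filter (\<lambda>c. c = 0) cs. [:-c, 1:]) = monom 1 ?z"
    by (induction cs) (auto simp: monom_altdef)
  moreover have "(\<Prod>c\<leftarrow>cs. g c) = (\<Prod>c\<leftarrow>filter (\<lambda>c. c = 0) cs. g c) * (\<Prod>c\<leftarrow>filter (\<lambda>c. c \<noteq> 0) cs. g c)"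
    for g :: "'a \<Rightarrow> 'a poly"
    by (induction cs) (auto simp: ac_simps)
  ultimately have "(\<Prod>c\<leftarrow>cs. [:-c, 1:]) = monom 1 ?z * ?R"
    by simp
  then have "coeff (\<Prod>c\<leftarrow>cs. [:-c, 1:]) ?z = poly ?R 0"
    by (simp add: coeff_monom_mult poly_0_coeff_0)
  also have "\<dots> = (\<Prod>c\<leftarrow>filter (\<lambda>c. c \<noteq> 0) cs. - c)"
    by (simp add: poly_prod_list o_def)
  finally show ?thesis .
qed

lemma prod_nonzero_roots_char_poly_of_int:
  fixes T :: "int mat" and cs :: "'a::comm_ring_1 list"
  assumes T: "T \<in> carrier_mat n n"
    and cp: "char_poly (map_mat of_int T :: 'a mat) = (\<Prod>c\<leftarrow>cs. [:-c, 1:])"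
  shows "\<exists>m::int. (\<Prod>c\<leftarrow>filter (\<lambda>c. c \<noteq> 0) cs. - c) = of_int m"
proof -
  have "char_poly (map_mat of_int T :: 'a mat) = of_int_poly (char_poly T)"
    using of_int_hom.char_poly_hom[OF T] by simp
  then have "coeff (char_poly (map_mat of_int T :: 'a mat)) (length (filter (\<lambda>c. c = 0) cs))
      = of_int (coeff (char_poly T) (length (filter (\<lambda>c. c = 0) cs)))"
    by simp
  then show ?thesis
    unfolding cp coeff_prod_linear_factors_lowest by blast
qed

lemma prod_nonzero_real_roots_ge_1:
  fixes T :: "int mat" and as :: "real list"
  assumes T: "T \<in> carrier_mat n n"
    and cp: "char_poly (map_mat of_int T :: complex mat) = (\<Prod>c\<leftarrow>map complex_of_real as. [:-c, 1:])"
    and nonneg: "\<forall>a \<in> set as. 0 \<le> a"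
  shows "1 \<le> prod_list (filter (\<lambda>a. a \<noteq> 0) as)"
proof -
  let ?P = "\<Prod>a\<leftarrow>filter (\<lambda>a. a \<noteq> 0) as. - a"
  obtain m :: int where "(\<Prod>c\<leftarrow>filter (\<lambda>c. c \<noteq> 0) (map complex_of_real as). - c) = of_int m"
    using prod_nonzero_roots_char_poly_of_int[OF T cp] by blast
  moreover have "(\<Prod>c\<leftarrow>filter (\<lambda>c. c \<noteq> 0) (map complex_of_real as). - c) = complex_of_real ?P"
    by (induction as) auto
  ultimately have m: "?P = of_int m"
    by (metis of_real_eq_iff of_real_of_int_eq)
  moreover have "?P \<noteq> 0"
    by (induction as) auto
  moreover have "\<bar>?P\<bar> = prod_list (filter (\<lambda>a. a \<noteq> 0) as)"
    using nonneg by (induction as) (auto simp: abs_mult)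
  ultimately show ?thesis
    by (metis of_int_0 of_int_abs of_int_1_le_iff zero_less_abs_iff int_one_le_iff_zero_less)
qed

definition psd_bounded :: "complex mat \<Rightarrow> real \<Rightarrow> bool" where
  "psd_bounded A B \<longleftrightarrow> (\<forall>v \<in> carrier_vec (dim_row A). \<exists>r.
     (\<Sum>i<dim_row A. cnj (v$i) * (A *\<^sub>v v)$i) = complex_of_real r \<and>
     0 \<le> r \<and> r \<le> B * (\<Sum>i<dim_row A. (cmod (v$i))\<^sup>2))"

lemma psd_bounded_eigenvalue:
  assumes A: "A \<in> carrier_mat n n" and psd: "psd_bounded A B" and ev: "eigenvalue A c"
  shows "\<exists>r. c = complex_of_real r \<and> 0 \<le> r \<and> r \<le> B"
proof -
  obtain v where v: "v \<in> carrier_vec n" and v0: "v \<noteq> 0\<^sub>v n" and Av: "A *\<^sub>v v = c \<cdot>\<^sub>v v"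
    using ev A unfolding eigenvalue_def eigenvector_def by auto
  define s where "s = (\<Sum>i<n. (cmod (v$i))\<^sup>2)"
  obtain r where r: "(\<Sum>i<n. cnj (v$i) * (A *\<^sub>v v)$i) = complex_of_real r"
    and r0: "0 \<le> r" and rB: "r \<le> B * s"
    using psd v A unfolding psd_bounded_def s_def by auto
  obtain i where i: "i < n" and vi: "v$i \<noteq> 0"
    using v v0 by (metis carrier_vecD eq_vecI index_zero_vec(1) index_zero_vec(2))
  have "0 < (cmod (v$i))\<^sup>2" using vi by simp
  also have "\<dots> \<le> s" unfolding s_def by (rule member_le_sum) (use i in auto)
  finally have s0: "0 < s" .
  have "(\<Sum>i<n. cnj (v$i) * (A *\<^sub>v v)$i) = (\<Sum>i<n. c * complex_of_real ((cmod (v$i))\<^sup>2))"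
  proof (intro sum.cong refl)
    fix j assume "j \<in> {..<n}"
    then have "(A *\<^sub>v v)$j = c * v$j" using Av v by simp
    then show "cnj (v$j) * (A *\<^sub>v v)$j = c * complex_of_real ((cmod (v$j))\<^sup>2)"
      using complex_norm_square[of "v$j"] by (simp add: ac_simps)
  qed
  also have "\<dots> = c * complex_of_real s" unfolding s_def by (simp add: sum_distrib_left)
  finally have "c = complex_of_real (r / s)" using r s0 by (simp add: field_simps)
  moreover have "r / s \<le> B" using rB s0 by (simp add: divide_le_eq)
  ultimately show ?thesis using r0 s0 by (intro exI[of _ "r / s"]) simp
qed

lemma psd_bounded_int_matrix_spectrum:
  fixes T :: "int mat"
  defines "A \<equiv> map_mat of_int T :: complex mat"
  assumes T: "T \<in> carrier_mat n n" and psd: "psd_bounded A B"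
  obtains as :: "real list"
  where "length as = n" and "\<forall>a \<in> set as. 0 \<le> a \<and> a \<le> B"
    and "\<And>k. (\<Sum>a\<leftarrow>as. a ^ k) = Re (mat_trace (A ^\<^sub>m k))"
    and "1 \<le> prod_list (filter (\<lambda>a. a \<noteq> 0) as)"
proof -
  have A: "A \<in> carrier_mat n n" using T by (simp add: A_def)
  obtain cs where cp: "char_poly A = (\<Prod>c\<leftarrow>cs. [:-c, 1:])" and lcs: "length cs = n"
    using char_poly_factorized[OF A] by blast
  have real_ev: "\<exists>r. c = complex_of_real r \<and> 0 \<le> r \<and> r \<le> B" if "c \<in> set cs" for c
  proof (rule psd_bounded_eigenvalue[OF A psd])
    have "poly (char_poly A) c = 0"
      unfolding cp poly_prod_list using that by (auto simp: prod_list_zero_iff o_def)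
    then show "eigenvalue A c" using eigenvalue_root_char_poly[OF A] by simp
  qed
  define as where "as = map Re cs"
  have cs_as: "cs = map complex_of_real as"
    unfolding as_def using real_ev by (induction cs) force+
  have bnd: "\<forall>a \<in> set as. 0 \<le> a \<and> a \<le> B"
    using real_ev unfolding as_def by fastforce
  have "(\<Sum>a\<leftarrow>as. a ^ k) = Re (mat_trace (A ^\<^sub>m k))" for k
  proof -
    have "(\<Sum>c\<leftarrow>cs. c ^ k) = complex_of_real (\<Sum>a\<leftarrow>as. a ^ k)"
      unfolding cs_as by (induction as) auto
    then show ?thesis using mat_trace_power_eq_sum_roots[OF A cp, of k] by simp
  qed
  moreover have "1 \<le> prod_list (filter (\<lambda>a. a \<noteq> 0) as)"
    using prod_nonzero_real_roots_ge_1[OF T cp[unfolded A_def cs_as]] bnd by blast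
  moreover have "length as = n" using lcs by (simp add: as_def)
  ultimately show ?thesis using that bnd by blast
qed

section \<open>Characters, Haar measure and Folner boxes\<close>

lemma character_continuous: "character ch \<Longrightarrow> continuous_on UNIV ch"
  and character_add: "character ch \<Longrightarrow> ch (x + y) = ch x * ch y"
  and character_norm: "character ch \<Longrightarrow> cmod (ch x) = 1"
  unfolding character_def by auto

lemma character_nonzero: "character ch \<Longrightarrow> ch x \<noteq> 0"
  using character_norm[of ch x] by auto

lemma character_mult_cnj: "character ch \<Longrightarrow> ch x * cnj (ch x) = 1"
  using complex_norm_square[of "ch x"] character_norm[of ch x] by simp

lemma character_mult: "character a \<Longrightarrow> character b \<Longrightarrow> character (\<lambda>x. a x * b x)"
  unfolding character_def by (auto intro!: continuous_intros simp: norm_mult ac_simps)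

lemma character_cnj: "character a \<Longrightarrow> character (\<lambda>x. cnj (a x))"
  unfolding character_def by (auto intro!: continuous_intros)

lemma character_eq_iff_mult_cnj:
  assumes "character a" "character b"
  shows "(\<lambda>x. a x * cnj (b x)) = (\<lambda>_. 1) \<longleftrightarrow> a = b"
proof -
  have "a x * cnj (b x) = 1 \<longleftrightarrow> a x = b x" for x
  proof
    assume "a x * cnj (b x) = 1"
    then have "a x * (cnj (b x) * b x) = b x" by (simp add: mult.assoc[symmetric])
    then show "a x = b x" using character_mult_cnj[OF assms(2), of x] by (simp add: ac_simps)
  qed (use character_mult_cnj[OF assms(2)] in simp)
  then show ?thesis by (auto simp: fun_eq_iff)
qed

definition char_monomial :: "('a \<Rightarrow> complex) set \<Rightarrow> (('a \<Rightarrow> complex) \<Rightarrow> int) \<Rightarrow> 'a \<Rightarrow> complex" where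
  "char_monomial S g = (\<lambda>x. \<Prod>ch\<in>S. ch x powi g ch)"

lemma character_char_monomial:
  assumes S: "\<And>ch. ch \<in> S \<Longrightarrow> character ch"
  shows "character (char_monomial S g)"
  unfolding character_def char_monomial_def
proof (intro conjI allI)
  show "continuous_on UNIV (\<lambda>x. \<Prod>ch\<in>S. ch x powi g ch)"
    using S character_nonzero character_continuous by (auto intro!: continuous_intros)
  show "(\<Prod>ch\<in>S. ch (x + y) powi g ch) = (\<Prod>ch\<in>S. ch x powi g ch) * (\<Prod>ch\<in>S. ch y powi g ch)" for x y
    unfolding prod.distrib[symmetric]
    by (intro prod.cong refl) (simp add: S character_add power_int_mult_distrib)
  show "cmod (\<Prod>ch\<in>S. ch x powi g ch) = 1" for x
    using S by (simp add: prod_norm[symmetric] norm_power_int character_norm)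
qed

text \<open>These boxes form a Folner sequence for the subgroup of the dual group generated by \<open>S\<close>.\<close>

definition char_box :: "('a \<Rightarrow> complex) set \<Rightarrow> nat \<Rightarrow> ('a \<Rightarrow> complex) set" where
  "char_box S n = char_monomial S ` (S \<rightarrow>\<^sub>E {-int n..int n})"

lemma finite_char_box: "finite S \<Longrightarrow> finite (char_box S n)"
  unfolding char_box_def by (intro finite_imageI finite_PiE) auto

lemma card_char_box_le: "finite S \<Longrightarrow> card (char_box S n) \<le> (2 * n + 1) ^ card S"
proof -
  assume S: "finite S"
  have "card (char_box S n) \<le> card (S \<rightarrow>\<^sub>E {-int n..int n})"
    unfolding char_box_def by (intro card_image_le finite_PiE S) auto
  also have "\<dots> = (2 * n + 1) ^ card S"
    using S by (simp add: card_PiE nat_add_distrib nat_mult_distrib)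
  finally show ?thesis .
qed

lemma char_box_mono: "m \<le> n \<Longrightarrow> char_box S m \<subseteq> char_box S n"
  unfolding char_box_def by (intro image_mono PiE_mono) auto

lemma one_in_char_box: "(\<lambda>_. 1) \<in> char_box S n"
proof -
  have "restrict (\<lambda>_. 0) S \<in> S \<rightarrow>\<^sub>E {-int n..int n}" by auto
  moreover have "char_monomial S (restrict (\<lambda>_. 0) S) = (\<lambda>_. 1)"
    unfolding char_monomial_def by (auto intro!: prod.neutral)
  ultimately show ?thesis unfolding char_box_def by (metis image_eqI)
qed

lemma char_box_character:
  "(\<And>ch. ch \<in> S \<Longrightarrow> character ch) \<Longrightarrow> \<gamma> \<in> char_box S n \<Longrightarrow> character \<gamma>"
  unfolding char_box_def using character_char_monomial by blast

lemma char_box_twist: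
  assumes S: "finite S" "\<And>ch. ch \<in> S \<Longrightarrow> character ch"
    and ch: "ch \<in> S" and ps: "ps \<in> S" and \<gamma>: "\<gamma> \<in> char_box S m"
  shows "(\<lambda>x. ch x * cnj (ps x) * \<gamma> x) \<in> char_box S (Suc m)"
proof -
  obtain g where g: "g \<in> S \<rightarrow>\<^sub>E {-int m..int m}" and \<gamma>_def: "\<gamma> = char_monomial S g"
    using \<gamma> unfolding char_box_def by auto
  define e where "e ph = (if ph = ch then 1 else 0) + (if ph = ps then -1 else (0::int))" for ph
  define g' where "g' = restrict (\<lambda>ph. g ph + e ph) S"
  have g': "g' \<in> S \<rightarrow>\<^sub>E {-int (Suc m)..int (Suc m)}"
    using g unfolding g'_def e_def by (auto simp: PiE_iff)
  have "char_monomial S g' x = \<gamma> x * (ch x * inverse (ps x))" for x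
  proof -
    have "char_monomial S g' x = (\<Prod>ph\<in>S. ph x powi g ph *
        (ph x powi (if ph = ch then 1 else 0) * ph x powi (if ph = ps then -1 else 0)))"
      unfolding char_monomial_def g'_def e_def
      by (intro prod.cong refl) (simp add: S(2) character_nonzero power_int_add)
    also have "\<dots> = \<gamma> x * ((\<Prod>ph\<in>S. ph x powi (if ph = ch then 1 else 0)) *
        (\<Prod>ph\<in>S. ph x powi (if ph = ps then -1 else 0)))"
      unfolding \<gamma>_def char_monomial_def by (simp add: prod.distrib)
    also have "\<dots> = \<gamma> x * (ch x * inverse (ps x))"
      using S(1) ch ps by (simp add: if_distrib[of "\<lambda>k. _ powi k"] prod.delta cong: if_cong)
    finally show ?thesis .
  qed
  moreover have "inverse (ps x) = cnj (ps x)" for x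
    using character_mult_cnj[OF S(2)[OF ps]] by (rule inverse_unique)
  ultimately have "(\<lambda>x. ch x * cnj (ps x) * \<gamma> x) = char_monomial S g'"
    by (auto simp: ac_simps)
  with g' show ?thesis unfolding char_box_def by blast
qed

lemma power_exceeds_polynomial:
  fixes r :: real and L s :: nat
  assumes r: "1 < r" and L: "0 < L"
  shows "\<exists>K. real ((2 * K * L + 1) ^ s) < r ^ K"
proof (cases "s = 0")
  case True
  then show ?thesis using r by (intro exI[of _ 1]) auto
next
  case False
  define \<rho> where "\<rho> = r powr (1 / s)"
  have \<rho>1: "1 < \<rho>" unfolding \<rho>_def using r False by (simp add: gr_one_powr)
  have \<rho>s: "\<rho> ^ s = r"
    unfolding \<rho>_def using r False by (simp add: powr_realpow[symmetric] powr_powr)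
  have lim: "(\<lambda>n. real n / \<rho> ^ n) \<longlonglongrightarrow> 0" using lim_n_over_pown[of \<rho>] \<rho>1 by simp
  have "0 < 1 / (3 * real L)" using L by simp
  from order_tendstoD(2)[OF lim this]
  obtain K0 where K0: "\<And>K. K \<ge> K0 \<Longrightarrow> real K / \<rho> ^ K < 1 / (3 * real L)"
    unfolding eventually_sequentially by blast
  define K where "K = max K0 1"
  have K1: "1 \<le> K" and "real K / \<rho> ^ K < 1 / (3 * real L)"
    using K0[of K] unfolding K_def by auto
  then have "3 * real L * real K < \<rho> ^ K" using \<rho>1 L by (simp add: field_simps)
  moreover have "real (2 * K * L + 1) \<le> 3 * real L * real K"
  proof -
    have "1 \<le> K * L" using K1 L by simp
    then have "(1::real) \<le> real K * real L" by (metis of_nat_1 of_nat_le_iff of_nat_mult)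
    then show ?thesis by (simp add: algebra_simps)
  qed
  ultimately have "real (2 * K * L + 1) < \<rho> ^ K" by linarith
  then have "real (2 * K * L + 1) ^ s < (\<rho> ^ K) ^ s" by (rule power_strict_mono) (use False in auto)
  also have "\<dots> = r ^ K" by (simp add: \<rho>s[symmetric] power_mult[symmetric] mult.commute)
  finally show ?thesis by (intro exI[of _ K]) simp
qed

lemma power_le_of_geometric_step:
  fixes c :: "nat \<Rightarrow> real"
  assumes step: "\<And>n. L \<le> n \<Longrightarrow> r * c (n - L) < c n" and r: "1 < r" and c0: "1 \<le> c 0"
  shows "r ^ k \<le> c (k * L)"
proof (induction k)
  case (Suc k)
  have "r ^ Suc k \<le> r * c (k * L)" using Suc r by simp
  also have "\<dots> < c (Suc k * L)" using step[of "Suc k * L"] by simp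
  finally show ?case by simp
qed (use c0 in simp)

text \<open>Polynomial growth of \<open>card (char_box S n)\<close> rules out a uniform exponential growth rate
  \<open>card (char_box S (n - L)) < (1 - \<theta>) * card (char_box S n)\<close>.\<close>

lemma char_box_folner:
  assumes S: "finite S" and \<theta>: "0 < \<theta>"
  shows "\<exists>n\<ge>L. real (card (char_box S n - char_box S (n - L))) \<le> \<theta> * real (card (char_box S n))"
proof (rule ccontr)
  define c where "c n = real (card (char_box S n))" for n
  have c1: "1 \<le> c n" for n
  proof -
    have "card (char_box S n) > 0"
      using finite_char_box[OF S] one_in_char_box card_gt_0_iff by blast
    then show ?thesis unfolding c_def by simp
  qed
  have diff: "real (card (char_box S n - char_box S (n - L))) = c n - c (n - L)" for n
    unfolding c_def using finite_char_box[OF S] char_box_mono[of "n - L" n S]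
    by (simp add: card_Diff_subset card_mono of_nat_diff)
  assume "\<not> ?thesis"
  then have big: "\<not> real (card (char_box S n - char_box S (n - L))) \<le> \<theta> * c n" if "L \<le> n" for n
    using that unfolding c_def by auto
  have decay: "c (n - L) < (1 - \<theta>) * c n" if "L \<le> n" for n
    using big[OF that] diff[of n] by (simp add: left_diff_distrib)
  have L: "0 < L"
  proof (rule ccontr)
    assume "\<not> 0 < L"
    then show False using decay[of 0] \<theta> c1[of 0] by simp
  qed
  have \<theta>1: "\<theta> < 1"
  proof (rule ccontr)
    assume "\<not> \<theta> < 1"
    then have "(1 - \<theta>) * c L \<le> 0" using c1[of L] by (simp add: mult_nonpos_nonneg)
    then show False using decay[of L] c1[of 0] by simp
  qed
  define r where "r = 1 / (1 - \<theta>)"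
  have r1: "1 < r" unfolding r_def using \<theta> \<theta>1 by simp
  have step: "r * c (n - L) < c n" if "L \<le> n" for n
    using decay[OF that] \<theta>1 by (simp add: r_def field_simps)
  obtain K where K: "real ((2 * K * L + 1) ^ card S) < r ^ K"
    using power_exceeds_polynomial[OF r1 L] by blast
  have "c (K * L) \<le> real ((2 * K * L + 1) ^ card S)"
    using card_char_box_le[OF S, of "K * L"] unfolding c_def by (simp only: mult.assoc of_nat_le_iff)
  then show False using K power_le_of_geometric_step[OF step r1 c1[of 0], of K] by simp
qed

locale haar_measure =
  fixes M :: "'a::topological_ab_group_add measure"
  assumes haar: "normalized_haar M"
begin

lemma space_eq [simp]: "space M = UNIV" and sets_eq: "sets M = sets borel"
  and prob_space_M: "prob_space M"
  using haar unfolding normalized_haar_def by auto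

sublocale prob_space M by (rule prob_space_M)

lemma continuous_measurable: "continuous_on UNIV g \<Longrightarrow> g \<in> borel_measurable M"
  using borel_measurable_continuous_onI measurable_cong_sets[OF sets_eq refl] by blast

lemma emeasure_translate: "A \<in> sets borel \<Longrightarrow> emeasure M ((\<lambda>x. a + x) ` A) = emeasure M A"
  using haar unfolding normalized_haar_def by auto

lemma measurable_translate: "(\<lambda>x. a + x) \<in> measurable M M"
proof -
  have "continuous_on UNIV (\<lambda>x::'a. a + x)" by (intro continuous_intros)
  then have "(\<lambda>x::'a. a + x) \<in> borel_measurable borel" by (rule borel_measurable_continuous_onI)
  then show ?thesis using measurable_cong_sets[OF sets_eq sets_eq] by blast
qed

lemma distr_translate: "distr M M (\<lambda>x. a + x) = M"
proof (rule measure_eqI)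
  fix A assume "A \<in> sets (distr M M (\<lambda>x. a + x))"
  then have A: "A \<in> sets borel" using sets_eq by simp
  have "(\<lambda>x. a + x) -` A \<inter> space M = (\<lambda>x. - a + x) ` A"
  proof (intro equalityI subsetI)
    fix x assume "x \<in> (\<lambda>x. a + x) -` A \<inter> space M"
    then have "a + x \<in> A" by simp
    moreover have "x = - a + (a + x)" by simp
    ultimately show "x \<in> (\<lambda>x. - a + x) ` A" by (rule rev_image_eqI)
  qed auto
  then show "emeasure (distr M M (\<lambda>x. a + x)) A = emeasure M A"
    using A emeasure_translate[OF A, of "- a"] measurable_translate sets_eq
    by (simp add: emeasure_distr)
qed simp

lemma integral_translate:
  fixes g :: "'a \<Rightarrow> 'b::{banach, second_countable_topology}"
  assumes "g \<in> borel_measurable M"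
  shows "(\<integral>x. g (a + x) \<partial>M) = (\<integral>x. g x \<partial>M)"
  using integral_distr[OF measurable_translate assms] by (simp add: distr_translate)

lemma integrable_continuous_bounded:
  fixes g :: "'a \<Rightarrow> 'b::{banach, second_countable_topology}"
  assumes "continuous_on UNIV g" "\<And>x. norm (g x) \<le> C"
  shows "integrable M g"
  by (rule integrable_const_bound[where B=C]) (use assms continuous_measurable in auto)

lemma integral_character:
  assumes g: "character g"
  shows "(\<integral>x. g x \<partial>M) = (if g = (\<lambda>_. 1) then 1 else 0)"
proof (cases "g = (\<lambda>_. 1)")
  case False
  then obtain a where a: "g a \<noteq> 1" by auto
  have "(\<integral>x. g x \<partial>M) = (\<integral>x. g (a + x) \<partial>M)"
    using integral_translate[OF continuous_measurable[OF character_continuous[OF g]]] by simp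
  also have "\<dots> = g a * (\<integral>x. g x \<partial>M)" using character_add[OF g] by simp
  finally show ?thesis using a False by (simp add: algebra_simps)
qed (use prob_space in simp)

lemma integral_character_mult_cnj:
  assumes "character b" "character g"
  shows "(\<integral>x. b x * cnj (g x) \<partial>M) = (if b = g then 1 else 0)"
  using integral_character[OF character_mult[OF assms(1) character_cnj[OF assms(2)]]]
    character_eq_iff_mult_cnj[OF assms] by simp

lemma integrable_weighted_character_product:
  assumes "continuous_on UNIV w" "\<And>x. cmod (w x) \<le> W" "character \<beta>" "character \<gamma>"
  shows "integrable M (\<lambda>x. w x * \<beta> x * cnj (\<gamma> x))"
proof (rule integrable_continuous_bounded[where C=W])
  show "continuous_on UNIV (\<lambda>x. w x * \<beta> x * cnj (\<gamma> x))"
    using assms(1) character_continuous[OF assms(3)] character_continuous[OF assms(4)]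
    by (intro continuous_intros)
  show "cmod (w x * \<beta> x * cnj (\<gamma> x)) \<le> W" for x
    using assms by (simp add: norm_mult character_norm)
qed


end

section \<open>The compression of multiplication by \<open>\<bar>f\<bar>\<^sup>2\<close> to a box\<close>

locale haar_int_char_poly = haar_measure M for M :: "'a::topological_ab_group_add measure" +
  fixes S :: "('a \<Rightarrow> complex) set" and c :: "('a \<Rightarrow> complex) \<Rightarrow> int"
  assumes finite_S: "finite S" and character_S: "\<And>ch. ch \<in> S \<Longrightarrow> character ch"
begin

definition F :: "'a \<Rightarrow> complex" where
  "F x = (\<Sum>ch\<in>S. of_int (c ch) * ch x)"

definition H :: "'a \<Rightarrow> real" where
  "H x = (cmod (F x))\<^sup>2"

definition hmax :: real where
  "hmax = (\<Sum>ch\<in>S. real_of_int \<bar>c ch\<bar>)\<^sup>2"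

definition twist :: "('a \<Rightarrow> complex) \<Rightarrow> ('a \<Rightarrow> complex) \<Rightarrow> ('a \<Rightarrow> complex) \<Rightarrow> 'a \<Rightarrow> complex" where
  "twist ch ps \<gamma> = (\<lambda>x. ch x * cnj (ps x) * \<gamma> x)"

text \<open>The Fourier coefficient of \<open>H = (\<Sum>ch. c ch * ch) * (\<Sum>ps. c ps * cnj ps)\<close> at
  \<open>\<gamma> * cnj \<gamma>'\<close>, an integer.\<close>

definition toeplitz_entry :: "('a \<Rightarrow> complex) \<Rightarrow> ('a \<Rightarrow> complex) \<Rightarrow> int" where
  "toeplitz_entry \<gamma> \<gamma>' =
     (\<Sum>p\<in>S \<times> S. c (fst p) * c (snd p) * (if twist (fst p) (snd p) \<gamma>' = \<gamma> then 1 else 0))"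

definition toeplitz :: "(nat \<Rightarrow> 'a \<Rightarrow> complex) \<Rightarrow> nat \<Rightarrow> int mat" where
  "toeplitz e N = mat N N (\<lambda>(i,j). toeplitz_entry (e i) (e j))"

lemma continuous_F: "continuous_on UNIV F"
  unfolding F_def by (intro continuous_intros character_continuous character_S)

lemma continuous_H: "continuous_on UNIV H"
  unfolding H_def by (intro continuous_intros continuous_F)

lemma measurable_F [measurable]: "F \<in> borel_measurable M"
  by (rule continuous_measurable[OF continuous_F])

lemma norm_F_le: "cmod (F x) \<le> (\<Sum>ch\<in>S. real_of_int \<bar>c ch\<bar>)"
proof -
  have "cmod (F x) \<le> (\<Sum>ch\<in>S. cmod (of_int (c ch) * ch x))"
    unfolding F_def by (rule norm_sum)
  also have "\<dots> = (\<Sum>ch\<in>S. real_of_int \<bar>c ch\<bar>)"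
    by (intro sum.cong refl) (simp add: norm_mult character_norm[OF character_S])
  finally show ?thesis .
qed

lemma hmax_nonneg: "0 \<le> hmax"
  unfolding hmax_def by simp

lemma H_nonneg: "0 \<le> H x"
  unfolding H_def by simp

lemma H_le_hmax: "H x \<le> hmax"
  unfolding H_def hmax_def by (rule power_mono[OF norm_F_le]) simp

lemma H_eq_sum_twists:
  "complex_of_real (H x) = (\<Sum>p\<in>S \<times> S. of_int (c (fst p) * c (snd p)) * (fst p x * cnj (snd p x)))"
proof -
  have "complex_of_real (H x) = F x * cnj (F x)"
    unfolding H_def using complex_norm_square[of "F x"] by simp
  also have "\<dots> = (\<Sum>ch\<in>S. of_int (c ch) * ch x) * (\<Sum>ps\<in>S. of_int (c ps) * cnj (ps x))"
    unfolding F_def by (simp add: cnj_sum)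
  also have "\<dots> = (\<Sum>ch\<in>S. \<Sum>ps\<in>S. of_int (c ch) * ch x * (of_int (c ps) * cnj (ps x)))"
    by (rule sum_product)
  also have "\<dots> = (\<Sum>p\<in>S \<times> S. of_int (c (fst p) * c (snd p)) * (fst p x * cnj (snd p x)))"
    by (simp add: sum.cartesian_product case_prod_unfold ac_simps)
  finally show ?thesis .
qed

lemma H_mult_eq_sum_twists:
  "complex_of_real (H x) * \<gamma> x = (\<Sum>p\<in>S \<times> S. of_int (c (fst p) * c (snd p)) * twist (fst p) (snd p) \<gamma> x)"
  unfolding H_eq_sum_twists twist_def by (simp add: sum_distrib_left sum_distrib_right ac_simps)

lemma continuous_H_power: "continuous_on UNIV (\<lambda>x. complex_of_real (H x) ^ k)"
  by (intro continuous_intros continuous_H)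

lemma norm_H_power_le: "cmod (complex_of_real (H x) ^ k) \<le> hmax ^ k"
  using H_nonneg H_le_hmax by (simp add: norm_power power_mono)

lemma integrable_H_power: "integrable M (\<lambda>x. H x ^ k)"
  by (rule integrable_continuous_bounded[where C="hmax ^ k"])
     (use continuous_H H_nonneg H_le_hmax in \<open>auto intro!: continuous_intros power_mono\<close>)

lemma integral_H_power_nonneg: "0 \<le> (\<integral>x. H x ^ k \<partial>M)"
  using H_nonneg by (intro Bochner_Integration.integral_nonneg) auto

lemma integral_H_power_le: "(\<integral>x. H x ^ k \<partial>M) \<le> hmax ^ k"
proof -
  have "(\<integral>x. H x ^ k \<partial>M) \<le> (\<integral>x. hmax ^ k \<partial>M)"
    using integrable_H_power H_nonneg H_le_hmax by (intro integral_mono) (auto intro!: power_mono)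
  also have "\<dots> = hmax ^ k" using prob_space by simp
  finally show ?thesis .
qed

lemma character_twist: "ch \<in> S \<Longrightarrow> ps \<in> S \<Longrightarrow> character \<gamma> \<Longrightarrow> character (twist ch ps \<gamma>)"
  unfolding twist_def using character_S by (intro character_mult character_cnj) auto

lemma twist_in_char_box:
  "p \<in> S \<times> S \<Longrightarrow> \<gamma> \<in> char_box S m \<Longrightarrow> twist (fst p) (snd p) \<gamma> \<in> char_box S (Suc m)"
  unfolding twist_def using char_box_twist[OF finite_S character_S] by auto

lemma twist_eq_if_toeplitz_entry_nonzero:
  "toeplitz_entry \<beta> \<gamma>' \<noteq> 0 \<Longrightarrow> \<exists>p\<in>S \<times> S. twist (fst p) (snd p) \<gamma>' = \<beta>"
  unfolding toeplitz_entry_def by (rule ccontr) (auto intro!: sum.neutral)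

lemma integral_H_mult_characters:
  assumes \<gamma>: "character \<gamma>" and \<gamma>': "character \<gamma>'"
  shows "(\<integral>x. complex_of_real (H x) * \<gamma>' x * cnj (\<gamma> x) \<partial>M) = of_int (toeplitz_entry \<gamma> \<gamma>')"
proof -
  have tw: "character (twist (fst p) (snd p) \<gamma>')" if "p \<in> S \<times> S" for p
    using that by (intro character_twist \<gamma>') auto
  have "complex_of_real (H x) * \<gamma>' x * cnj (\<gamma> x)
      = (\<Sum>p\<in>S \<times> S. of_int (c (fst p) * c (snd p)) * (twist (fst p) (snd p) \<gamma>' x * cnj (\<gamma> x)))" for x
    unfolding H_mult_eq_sum_twists by (simp add: sum_distrib_right mult.assoc)
  then have "(\<integral>x. complex_of_real (H x) * \<gamma>' x * cnj (\<gamma> x) \<partial>M)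
      = (\<integral>x. (\<Sum>p\<in>S \<times> S. of_int (c (fst p) * c (snd p)) * (twist (fst p) (snd p) \<gamma>' x * cnj (\<gamma> x))) \<partial>M)"
    by simp
  also have "\<dots> = (\<Sum>p\<in>S \<times> S. of_int (c (fst p) * c (snd p)) * (\<integral>x. twist (fst p) (snd p) \<gamma>' x * cnj (\<gamma> x) \<partial>M))"
    using integrable_weighted_character_product[of "\<lambda>_. 1" 1 _ \<gamma>] tw \<gamma>
    by (subst Bochner_Integration.integral_sum) auto
  also have "\<dots> = of_int (toeplitz_entry \<gamma> \<gamma>')"
    unfolding toeplitz_entry_def using tw
    by (simp add: integral_character_mult_cnj[OF _ \<gamma>] of_int_sum) (intro sum.cong refl, auto)
  finally show ?thesis .
qed

lemma sum_toeplitz_entry_mult_character: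
  assumes B: "finite B" and tw: "\<And>p. p \<in> S \<times> S \<Longrightarrow> twist (fst p) (snd p) \<gamma>' \<in> B"
  shows "(\<Sum>\<beta>\<in>B. of_int (toeplitz_entry \<beta> \<gamma>') * \<beta> x) = complex_of_real (H x) * \<gamma>' x"
proof -
  have "(\<Sum>\<beta>\<in>B. of_int (toeplitz_entry \<beta> \<gamma>') * \<beta> x) =
      (\<Sum>\<beta>\<in>B. \<Sum>p\<in>S \<times> S. (if twist (fst p) (snd p) \<gamma>' = \<beta> then of_int (c (fst p) * c (snd p)) * \<beta> x else 0))"
    unfolding toeplitz_entry_def by (intro sum.cong refl) (auto simp: of_int_sum sum_distrib_right intro!: sum.cong)
  also have "\<dots> = (\<Sum>p\<in>S \<times> S. of_int (c (fst p) * c (snd p)) * twist (fst p) (snd p) \<gamma>' x)"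
    using B tw by (subst sum.swap) (simp add: sum.delta)
  also have "\<dots> = complex_of_real (H x) * \<gamma>' x"
    by (rule H_mult_eq_sum_twists[symmetric])
  finally show ?thesis .
qed

lemma sum_abs_toeplitz_entry_le:
  assumes B: "finite B"
  shows "(\<Sum>\<beta>\<in>B. real_of_int \<bar>toeplitz_entry \<beta> \<gamma>'\<bar>) \<le> hmax"
proof -
  let ?a = "\<lambda>p. real_of_int \<bar>c (fst p) * c (snd p)\<bar>"
  have "(\<Sum>\<beta>\<in>B. real_of_int \<bar>toeplitz_entry \<beta> \<gamma>'\<bar>) \<le>
      (\<Sum>\<beta>\<in>B. \<Sum>p\<in>S \<times> S. (if twist (fst p) (snd p) \<gamma>' = \<beta> then ?a p else 0))"
  proof (rule sum_mono)
    fix \<beta>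
    have "real_of_int \<bar>toeplitz_entry \<beta> \<gamma>'\<bar>
        = \<bar>\<Sum>p\<in>S \<times> S. real_of_int (c (fst p) * c (snd p) * (if twist (fst p) (snd p) \<gamma>' = \<beta> then 1 else 0))\<bar>"
      unfolding toeplitz_entry_def by (simp only: of_int_abs of_int_sum)
    also have "\<dots> \<le> (\<Sum>p\<in>S \<times> S. \<bar>real_of_int (c (fst p) * c (snd p) * (if twist (fst p) (snd p) \<gamma>' = \<beta> then 1 else 0))\<bar>)"
      by (rule sum_abs)
    also have "\<dots> = (\<Sum>p\<in>S \<times> S. (if twist (fst p) (snd p) \<gamma>' = \<beta> then ?a p else 0))"
      by (intro sum.cong refl) auto
    finally show "real_of_int \<bar>toeplitz_entry \<beta> \<gamma>'\<bar> \<le> \<dots>" .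
  qed
  also have "\<dots> = (\<Sum>p\<in>S \<times> S. \<Sum>\<beta>\<in>B. (if twist (fst p) (snd p) \<gamma>' = \<beta> then ?a p else 0))"
    by (rule sum.swap)
  also have "\<dots> \<le> (\<Sum>p\<in>S \<times> S. ?a p)"
    using B by (intro sum_mono) (simp add: sum.delta)
  also have "\<dots> = hmax"
    unfolding hmax_def
    by (simp add: sum.cartesian_product case_prod_unfold abs_mult sum_product power2_eq_square)
  finally show ?thesis .
qed

end

locale toeplitz_box = haar_int_char_poly M S c
  for M :: "'a::topological_ab_group_add measure" and S c +
  fixes e :: "nat \<Rightarrow> 'a \<Rightarrow> complex" and N n :: nat
  assumes bij_e: "bij_betw e {..<N} (char_box S n)"
begin

abbreviation T :: "complex mat" where
  "T \<equiv> map_mat complex_of_int (toeplitz e N)"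

lemma e_in_char_box: "l < N \<Longrightarrow> e l \<in> char_box S n"
  using bij_e by (auto simp: bij_betw_def)

lemma character_e: "l < N \<Longrightarrow> character (e l)"
  using char_box_character[OF character_S] e_in_char_box by blast

lemma e_eq_iff: "i < N \<Longrightarrow> j < N \<Longrightarrow> e i = e j \<longleftrightarrow> i = j"
  using bij_e by (auto simp: bij_betw_def inj_on_def)

lemma integral_e_mult_cnj: "i < N \<Longrightarrow> j < N \<Longrightarrow> (\<integral>x. e j x * cnj (e i x) \<partial>M) = (if i = j then 1 else 0)"
  using integral_character_mult_cnj[OF character_e character_e] e_eq_iff by auto

lemma T_carrier: "T \<in> carrier_mat N N"
  unfolding toeplitz_def by simp

lemma T_index: "i < N \<Longrightarrow> j < N \<Longrightarrow> T $$ (i,j) = of_int (toeplitz_entry (e i) (e j))"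
  unfolding toeplitz_def by simp

text \<open>\<open>T\<close> is the compression of multiplication by \<open>H\<close> to the span of \<open>char_box S n\<close>, so
  applying it to a column whose twists stay in the box multiplies the column by \<open>H\<close>.\<close>

lemma sum_integral_mult_T_column:
  assumes w: "continuous_on UNIV w" "\<And>x. cmod (w x) \<le> W" and i: "i < N" and j: "j < N"
    and tw: "\<And>p. p \<in> S \<times> S \<Longrightarrow> twist (fst p) (snd p) (e j) \<in> char_box S n"
  shows "(\<Sum>l<N. (\<integral>x. w x * e l x * cnj (e i x) \<partial>M) * T $$ (l,j))
       = (\<integral>x. w x * complex_of_real (H x) * e j x * cnj (e i x) \<partial>M)"
proof -
  let ?g = "\<lambda>\<beta>. (\<integral>x. w x * \<beta> x * cnj (e i x) \<partial>M) * of_int (toeplitz_entry \<beta> (e j))"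
  have "(\<Sum>l<N. (\<integral>x. w x * e l x * cnj (e i x) \<partial>M) * T $$ (l,j)) = (\<Sum>l<N. ?g (e l))"
    using j by (simp add: T_index)
  also have "\<dots> = (\<Sum>\<beta>\<in>char_box S n. ?g \<beta>)"
    by (rule sum.reindex_bij_betw[OF bij_e])
  also have "\<dots> = (\<integral>x. (\<Sum>\<beta>\<in>char_box S n. of_int (toeplitz_entry \<beta> (e j)) * (w x * \<beta> x * cnj (e i x))) \<partial>M)"
    using integrable_weighted_character_product[OF w _ character_e[OF i]] char_box_character[OF character_S]
    by (subst Bochner_Integration.integral_sum) (auto simp: mult.commute)
  also have "\<dots> = (\<integral>x. w x * cnj (e i x) * (\<Sum>\<beta>\<in>char_box S n. of_int (toeplitz_entry \<beta> (e j)) * \<beta> x) \<partial>M)"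
    by (simp add: sum_distrib_left ac_simps)
  also have "\<dots> = (\<integral>x. w x * cnj (e i x) * (complex_of_real (H x) * e j x) \<partial>M)"
    by (simp only: sum_toeplitz_entry_mult_character[OF finite_char_box[OF finite_S] tw])
  also have "\<dots> = (\<integral>x. w x * complex_of_real (H x) * e j x * cnj (e i x) \<partial>M)"
    by (simp add: ac_simps)
  finally show ?thesis .
qed

lemma T_power_entry:
  assumes "k \<le> n" "i < N" "j < N" "e j \<in> char_box S (n - k)"
  shows "(T ^\<^sub>m k) $$ (i,j) = (\<integral>x. complex_of_real (H x) ^ k * e j x * cnj (e i x) \<partial>M)"
  using assms(1,3,4)
proof (induction k arbitrary: j)
  case 0
  then show ?case using T_carrier integral_e_mult_cnj[OF \<open>i < N\<close>] \<open>i < N\<close> by simp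
next
  case (Suc k)
  have "Suc (n - Suc k) = n - k" using Suc.prems(1) by simp
  then have tw: "twist (fst p) (snd p) (e j) \<in> char_box S (n - k)" if "p \<in> S \<times> S" for p
    using twist_in_char_box[OF that Suc.prems(3)] by simp
  have "(T ^\<^sub>m Suc k) $$ (i,j) = (\<Sum>l<N. (T ^\<^sub>m k) $$ (i,l) * T $$ (l,j))"
    using index_mult_mat_square[of "T ^\<^sub>m k" N T i j] T_carrier \<open>i < N\<close> Suc.prems by simp
  also have "\<dots> = (\<Sum>l<N. (\<integral>x. complex_of_real (H x) ^ k * e l x * cnj (e i x) \<partial>M) * T $$ (l,j))"
  proof (intro sum.cong refl)
    fix l assume l: "l \<in> {..<N}"
    show "(T ^\<^sub>m k) $$ (i,l) * T $$ (l,j) = (\<integral>x. complex_of_real (H x) ^ k * e l x * cnj (e i x) \<partial>M) * T $$ (l,j)"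
    proof (cases "toeplitz_entry (e l) (e j) = 0")
      case False
      then obtain p where "p \<in> S \<times> S" "twist (fst p) (snd p) (e j) = e l"
        using twist_eq_if_toeplitz_entry_nonzero by blast
      then have "e l \<in> char_box S (n - k)" using tw by metis
      then show ?thesis using Suc.IH[of l] Suc.prems l by simp
    qed (use l Suc.prems T_index in simp)
  qed
  also have "\<dots> = (\<integral>x. complex_of_real (H x) ^ k * complex_of_real (H x) * e j x * cnj (e i x) \<partial>M)"
    using tw char_box_mono[of "n - k" n S] Suc.prems \<open>i < N\<close>
    by (intro sum_integral_mult_T_column[where W="hmax ^ k"] continuous_H_power norm_H_power_le) auto
  finally show ?case by (simp add: ac_simps)
qed

lemma T_power_entry_bound:
  assumes "i < N" "j < N"
  shows "cmod ((T ^\<^sub>m k) $$ (i,j)) \<le> hmax ^ k"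
  using assms(2)
proof (induction k arbitrary: j)
  case 0
  then show ?case using T_carrier \<open>i < N\<close> by simp
next
  case (Suc k)
  have "cmod ((T ^\<^sub>m Suc k) $$ (i,j)) = cmod (\<Sum>l<N. (T ^\<^sub>m k) $$ (i,l) * T $$ (l,j))"
    using index_mult_mat_square[of "T ^\<^sub>m k" N T i j] T_carrier assms(1) Suc.prems by simp
  also have "\<dots> \<le> (\<Sum>l<N. hmax ^ k * real_of_int \<bar>toeplitz_entry (e l) (e j)\<bar>)"
    using Suc.IH Suc.prems T_index
    by (intro order_trans[OF norm_sum] sum_mono) (auto simp: norm_mult intro: mult_right_mono)
  also have "\<dots> = hmax ^ k * (\<Sum>l<N. real_of_int \<bar>toeplitz_entry (e l) (e j)\<bar>)"
    by (simp add: sum_distrib_left)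
  also have "\<dots> = hmax ^ k * (\<Sum>\<beta>\<in>char_box S n. real_of_int \<bar>toeplitz_entry \<beta> (e j)\<bar>)"
    using sum.reindex_bij_betw[OF bij_e, of "\<lambda>\<beta>. real_of_int \<bar>toeplitz_entry \<beta> (e j)\<bar>"] by simp
  also have "\<dots> \<le> hmax ^ k * hmax"
    by (intro mult_left_mono sum_abs_toeplitz_entry_le finite_char_box finite_S) (use hmax_nonneg in simp)
  finally show ?case by (simp add: mult.commute)
qed

definition vec_poly :: "complex Matrix.vec \<Rightarrow> 'a \<Rightarrow> complex" where
  "vec_poly v x = (\<Sum>j<N. v$j * e j x)"

lemma continuous_vec_poly: "continuous_on UNIV (vec_poly v)"
  unfolding vec_poly_def by (intro continuous_intros character_continuous character_e) auto

lemma norm_vec_poly_le: "cmod (vec_poly v x) \<le> (\<Sum>j<N. cmod (v$j))"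
  unfolding vec_poly_def using character_norm[OF character_e]
  by (intro order_trans[OF norm_sum]) (simp add: norm_mult)

lemma integrable_weighted_norm_vec_poly:
  assumes "continuous_on UNIV w" "\<And>x. \<bar>w x\<bar> \<le> W"
  shows "integrable M (\<lambda>x. w x * (cmod (vec_poly v x))\<^sup>2)"
proof (rule integrable_continuous_bounded[where C="W * (\<Sum>j<N. cmod (v$j))\<^sup>2"])
  show "continuous_on UNIV (\<lambda>x. w x * (cmod (vec_poly v x))\<^sup>2)"
    using assms(1) continuous_vec_poly by (intro continuous_intros)
  show "norm (w x * (cmod (vec_poly v x))\<^sup>2) \<le> W * (\<Sum>j<N. cmod (v$j))\<^sup>2" for x
    using assms(2)[of x] norm_vec_poly_le[of v x]
    by (auto simp: abs_mult intro!: mult_mono power_mono)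
qed

lemma integral_sesquilinear:
  assumes w: "continuous_on UNIV w" "\<And>x. cmod (w x) \<le> W"
  shows "(\<Sum>i<N. \<Sum>j<N. cnj (v$i) * v$j * (\<integral>x. w x * e j x * cnj (e i x) \<partial>M))
    = (\<integral>x. w x * complex_of_real ((cmod (vec_poly v x))\<^sup>2) \<partial>M)"
proof -
  have int: "integrable M (\<lambda>x. a * (w x * e j x * cnj (e i x)))" if "i < N" "j < N" for a i j
    using integrable_weighted_character_product[OF w character_e character_e] that by simp
  have "(\<lambda>x. w x * complex_of_real ((cmod (vec_poly v x))\<^sup>2)) =
      (\<lambda>x. \<Sum>i<N. \<Sum>j<N. cnj (v$i) * v$j * (w x * e j x * cnj (e i x)))"
    unfolding complex_norm_square vec_poly_def
    by (auto simp: cnj_sum sum_distrib_left sum_distrib_right ac_simps intro!: ext sum.cong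
        | subst sum.swap)+
  then have "(\<integral>x. w x * complex_of_real ((cmod (vec_poly v x))\<^sup>2) \<partial>M) =
      (\<integral>x. (\<Sum>i<N. \<Sum>j<N. cnj (v$i) * v$j * (w x * e j x * cnj (e i x))) \<partial>M)"
    by simp
  also have "\<dots> = (\<Sum>i<N. \<integral>x. (\<Sum>j<N. cnj (v$i) * v$j * (w x * e j x * cnj (e i x))) \<partial>M)"
    by (rule Bochner_Integration.integral_sum) (auto intro!: Bochner_Integration.integrable_sum int)
  also have "\<dots> = (\<Sum>i<N. \<Sum>j<N. \<integral>x. cnj (v$i) * v$j * (w x * e j x * cnj (e i x)) \<partial>M)"
    by (intro sum.cong refl Bochner_Integration.integral_sum) (auto intro!: int)
  finally show ?thesis by simp
qed

lemma integral_norm_vec_poly: "(\<integral>x. (cmod (vec_poly v x))\<^sup>2 \<partial>M) = (\<Sum>i<N. (cmod (v$i))\<^sup>2)"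
proof -
  have "complex_of_real (\<integral>x. (cmod (vec_poly v x))\<^sup>2 \<partial>M)
      = (\<Sum>i<N. \<Sum>j<N. cnj (v$i) * v$j * (\<integral>x. 1 * e j x * cnj (e i x) \<partial>M))"
    using integral_sesquilinear[of "\<lambda>_. 1" 1 v] by (simp flip: integral_complex_of_real)
  also have "\<dots> = (\<Sum>i<N. cnj (v$i) * v$i)"
    by (simp add: integral_e_mult_cnj if_distrib[of "\<lambda>t. _ * t"] sum.delta cong: if_cong)
  also have "\<dots> = complex_of_real (\<Sum>i<N. (cmod (v$i))\<^sup>2)"
    unfolding of_real_sum by (intro sum.cong refl) (simp add: complex_norm_square mult.commute del: of_real_power)
  finally show ?thesis by (simp only: of_real_eq_iff)
qed

lemma quadratic_form_T:
  assumes v: "v \<in> carrier_vec N"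
  shows "(\<Sum>i<N. cnj (v$i) * (T *\<^sub>v v)$i) = complex_of_real (\<integral>x. H x * (cmod (vec_poly v x))\<^sup>2 \<partial>M)"
proof -
  have Tv: "(T *\<^sub>v v)$i = (\<Sum>j<N. (\<integral>x. complex_of_real (H x) * e j x * cnj (e i x) \<partial>M) * v$j)" if "i < N" for i
  proof -
    have "(T *\<^sub>v v)$i = (\<Sum>j<N. T $$ (i,j) * v$j)"
      using that v T_carrier by (auto simp: scalar_prod_def atLeast0LessThan intro!: sum.cong)
    then show ?thesis
      using that by (simp add: T_index integral_H_mult_characters[OF character_e character_e])
  qed
  have "(\<Sum>i<N. cnj (v$i) * (T *\<^sub>v v)$i)
      = (\<Sum>i<N. \<Sum>j<N. cnj (v$i) * v$j * (\<integral>x. complex_of_real (H x) * e j x * cnj (e i x) \<partial>M))"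
    using Tv by (intro sum.cong refl) (simp add: sum_distrib_left ac_simps)
  also have "\<dots> = (\<integral>x. complex_of_real (H x * (cmod (vec_poly v x))\<^sup>2) \<partial>M)"
    using integral_sesquilinear[of "\<lambda>x. complex_of_real (H x)" hmax v] continuous_H H_nonneg H_le_hmax
    by (auto intro!: continuous_intros)
  also have "\<dots> = complex_of_real (\<integral>x. H x * (cmod (vec_poly v x))\<^sup>2 \<partial>M)"
    by (rule integral_complex_of_real)
  finally show ?thesis .
qed

lemma psd_bounded_T: "psd_bounded T hmax"
  unfolding psd_bounded_def
proof (intro ballI exI conjI)
  fix v :: "complex Matrix.vec" assume "v \<in> carrier_vec (dim_row T)"
  then have v: "v \<in> carrier_vec N" and dim: "dim_row T = N" using T_carrier by auto
  show "(\<Sum>i<dim_row T. cnj (v$i) * (T *\<^sub>v v)$i) = complex_of_real (\<integral>x. H x * (cmod (vec_poly v x))\<^sup>2 \<partial>M)"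
    unfolding dim by (rule quadratic_form_T[OF v])
  show "0 \<le> (\<integral>x. H x * (cmod (vec_poly v x))\<^sup>2 \<partial>M)"
    using H_nonneg by (intro Bochner_Integration.integral_nonneg) auto
  have "(\<integral>x. H x * (cmod (vec_poly v x))\<^sup>2 \<partial>M) \<le> (\<integral>x. hmax * (cmod (vec_poly v x))\<^sup>2 \<partial>M)"
    using integrable_weighted_norm_vec_poly[of H hmax] integrable_weighted_norm_vec_poly[of "\<lambda>_. hmax" hmax]
      continuous_H H_nonneg H_le_hmax hmax_nonneg
    by (intro integral_mono mult_right_mono) auto
  also have "\<dots> = hmax * (\<Sum>i<dim_row T. (cmod (v$i))\<^sup>2)"
    unfolding dim integral_norm_vec_poly[symmetric] by simp
  finally show "(\<integral>x. H x * (cmod (vec_poly v x))\<^sup>2 \<partial>M) \<le> hmax * (\<Sum>i<dim_row T. (cmod (v$i))\<^sup>2)" .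
qed

text \<open>Diagonal entries indexed by \<open>char_box S (n - k)\<close> are exactly \<open>\<integral> H ^ k\<close>; the
  others are bounded, and there are few of them by the Folner property.\<close>

lemma trace_T_power_approx:
  assumes k: "k \<le> n"
  shows "\<bar>Re (mat_trace (T ^\<^sub>m k)) - real N * (\<integral>x. H x ^ k \<partial>M)\<bar>
      \<le> real (card (char_box S n - char_box S (n - k))) * (2 * hmax ^ k)"
proof -
  define I where "I = (\<integral>x. H x ^ k \<partial>M)"
  let ?far = "{i\<in>{..<N}. e i \<notin> char_box S (n - k)}"
  have entry: "\<bar>Re ((T ^\<^sub>m k) $$ (i,i)) - I\<bar> \<le> (if i \<in> ?far then 2 * hmax ^ k else 0)" if i: "i < N" for i
  proof (cases "i \<in> ?far")
    case False
    then have "(T ^\<^sub>m k) $$ (i,i) = (\<integral>x. complex_of_real (H x ^ k) \<partial>M)"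
      using T_power_entry[OF k i i] i character_mult_cnj[OF character_e[OF i]] by (simp add: mult.assoc)
    then show ?thesis using False hmax_nonneg unfolding I_def integral_complex_of_real by simp
  next
    case True
    have "\<bar>Re ((T ^\<^sub>m k) $$ (i,i))\<bar> \<le> hmax ^ k"
      using T_power_entry_bound[OF i i, of k] abs_Re_le_cmod order_trans by blast
    moreover have "\<bar>I\<bar> \<le> hmax ^ k" unfolding I_def using integral_H_power_nonneg integral_H_power_le by simp
    ultimately show ?thesis using True by simp
  qed
  have "\<bar>Re (mat_trace (T ^\<^sub>m k)) - real N * I\<bar> = \<bar>\<Sum>i<N. Re ((T ^\<^sub>m k) $$ (i,i)) - I\<bar>"
    unfolding mat_trace_def using T_carrier by (simp add: sum_subtractf)
  also have "\<dots> \<le> (\<Sum>i<N. if i \<in> ?far then 2 * hmax ^ k else 0)"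
    using entry by (intro order_trans[OF sum_abs] sum_mono) auto
  also have "\<dots> = real (card ?far) * (2 * hmax ^ k)"
    by (simp add: sum.If_cases Int_def)
  also have "card ?far = card (char_box S n - char_box S (n - k))"
    using bij_e by (intro bij_betw_same_card[of e]) (auto simp: bij_betw_def inj_on_def)
  finally show ?thesis unfolding I_def .
qed

end

context haar_int_char_poly
begin

lemma toeplitz_spectrum:
  obtains as :: "real list"
  where "length as = card (char_box S n)" and "\<forall>a \<in> set as. 0 \<le> a \<and> a \<le> hmax"
    and "1 \<le> prod_list (filter (\<lambda>a. a \<noteq> 0) as)"
    and "\<And>k. k \<le> n \<Longrightarrow> \<bar>(\<Sum>a\<leftarrow>as. a ^ k) - real (card (char_box S n)) * (\<integral>x. H x ^ k \<partial>M)\<bar>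
          \<le> real (card (char_box S n - char_box S (n - k))) * (2 * hmax ^ k)"
proof -
  obtain e where "bij_betw e {..<card (char_box S n)} (char_box S n)"
    using ex_bij_betw_nat_finite[OF finite_char_box[OF finite_S]] by (auto simp: atLeast0LessThan)
  then interpret toeplitz_box M S c e "card (char_box S n)" n
    by unfold_locales
  obtain as where "length as = card (char_box S n)" "\<forall>a \<in> set as. 0 \<le> a \<and> a \<le> hmax"
    "\<And>k. (\<Sum>a\<leftarrow>as. a ^ k) = Re (mat_trace (T ^\<^sub>m k))" "1 \<le> prod_list (filter (\<lambda>a. a \<noteq> 0) as)"
    using psd_bounded_int_matrix_spectrum[of "toeplitz e (card (char_box S n))" "card (char_box S n)" hmax]
      psd_bounded_T by (auto simp: toeplitz_def)
  with trace_T_power_approx that show ?thesis by simp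
qed

end

section \<open>Szego's argument\<close>

lemma sum_list_ln_add_ge:
  fixes as :: "real list"
  assumes "\<forall>a \<in> set as. 0 \<le> a" and \<epsilon>: "0 < \<epsilon>"
  shows "real (length (filter (\<lambda>a. a = 0) as)) * ln \<epsilon> + ln (prod_list (filter (\<lambda>a. a \<noteq> 0) as))
    \<le> (\<Sum>a\<leftarrow>as. ln (a + \<epsilon>))"
  using assms(1)
proof (induction as)
  case (Cons a as)
  show ?case
  proof (cases "a = 0")
    case False
    with Cons.prems have a: "0 < a" by auto
    have "0 < prod_list (filter (\<lambda>a. a \<noteq> 0) as)"
      using Cons.prems by (induction as) (auto intro: mult_pos_pos)
    then have "ln (prod_list (filter (\<lambda>a. a \<noteq> 0) (a # as))) = ln a + ln (prod_list (filter (\<lambda>a. a \<noteq> 0) as))"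
      using a False by (simp add: ln_mult)
    moreover have "ln a \<le> ln (a + \<epsilon>)" using a \<epsilon> by simp
    ultimately show ?thesis using Cons False by simp
  qed (use Cons in \<open>simp add: algebra_simps\<close>)
qed simp

lemma length_filter_zero_le_sum_list:
  fixes as :: "real list"
  assumes "\<And>a. a \<in> set as \<Longrightarrow> 0 \<le> q a" and "1 \<le> q 0"
  shows "real (length (filter (\<lambda>a. a = 0) as)) \<le> (\<Sum>a\<leftarrow>as. q a)"
  using assms by (induction as) (auto intro: add_mono add_increasing)

text \<open>The nonzero eigenvalues have product \<open>\<ge> 1\<close>, so \<open>\<Sum> ln (a + \<epsilon>)\<close> is at least
  \<open>ln \<epsilon>\<close> times the number of zero eigenvalues, which \<open>q\<close> dominates.\<close>

lemma ln_mult_sum_list_le: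
  fixes as :: "real list"
  assumes bnd: "\<forall>a \<in> set as. 0 \<le> a \<and> a \<le> B" and prod: "1 \<le> prod_list (filter (\<lambda>a. a \<noteq> 0) as)"
    and \<epsilon>: "0 < \<epsilon>" "\<epsilon> < 1"
    and p: "\<And>t. t \<in> {0..B} \<Longrightarrow> ln (t + \<epsilon>) \<le> p t"
    and q: "\<And>t. t \<in> {0..B} \<Longrightarrow> 0 \<le> q t" "1 \<le> q 0"
  shows "ln \<epsilon> * (\<Sum>a\<leftarrow>as. q a) \<le> (\<Sum>a\<leftarrow>as. p a)"
proof -
  have "ln \<epsilon> * (\<Sum>a\<leftarrow>as. q a) \<le> ln \<epsilon> * real (length (filter (\<lambda>a. a = 0) as))"
    using length_filter_zero_le_sum_list[of as q] q bnd \<epsilon> by (intro mult_left_mono_neg) auto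
  also have "\<dots> \<le> (\<Sum>a\<leftarrow>as. ln (a + \<epsilon>))"
  proof -
    have "0 \<le> ln (prod_list (filter (\<lambda>a. a \<noteq> 0) as))" using prod by simp
    then show ?thesis using sum_list_ln_add_ge[of as \<epsilon>] bnd \<epsilon> by (simp add: mult.commute)
  qed
  also have "\<dots> \<le> (\<Sum>a\<leftarrow>as. p a)"
    using bnd p by (intro sum_list_mono) auto
  finally show ?thesis .
qed

context haar_int_char_poly
begin

lemma sum_list_polynomial_approx:
  assumes tr: "\<And>k. k \<le> n \<Longrightarrow> \<bar>(\<Sum>t\<leftarrow>as. t ^ k) - real (card (char_box S n)) * (\<integral>x. H x ^ k \<partial>M)\<bar>
        \<le> real (card (char_box S n - char_box S (n - k))) * (2 * hmax ^ k)"
    and d: "d \<le> n"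
  shows "\<bar>(\<Sum>t\<leftarrow>as. \<Sum>i\<le>d. a i * t ^ i) - real (card (char_box S n)) * (\<integral>x. (\<Sum>i\<le>d. a i * H x ^ i) \<partial>M)\<bar>
     \<le> real (card (char_box S n - char_box S (n - d))) * (\<Sum>i\<le>d. \<bar>a i\<bar> * (2 * hmax ^ i))"
proof -
  define N where "N = real (card (char_box S n))"
  define E where "E = real (card (char_box S n - char_box S (n - d)))"
  have "(\<Sum>t\<leftarrow>as. \<Sum>i\<le>d. a i * t ^ i) - N * (\<integral>x. (\<Sum>i\<le>d. a i * H x ^ i) \<partial>M)
      = (\<Sum>i\<le>d. a i * ((\<Sum>t\<leftarrow>as. t ^ i) - N * (\<integral>x. H x ^ i \<partial>M)))"
  proof -
    have "(\<Sum>t\<leftarrow>as. \<Sum>i\<le>d. a i * t ^ i) = (\<Sum>i\<le>d. a i * (\<Sum>t\<leftarrow>as. t ^ i))"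
      by (induction as) (simp_all add: sum.distrib distrib_left)
    moreover have "(\<integral>x. (\<Sum>i\<le>d. a i * H x ^ i) \<partial>M) = (\<Sum>i\<le>d. a i * (\<integral>x. H x ^ i \<partial>M))"
      by (subst Bochner_Integration.integral_sum) (auto intro: integrable_H_power)
    ultimately show ?thesis by (simp add: sum_distrib_left sum_subtractf algebra_simps)
  qed
  also have "\<bar>\<dots>\<bar> \<le> (\<Sum>i\<le>d. \<bar>a i\<bar> * (E * (2 * hmax ^ i)))"
  proof (intro order_trans[OF sum_abs] sum_mono)
    fix i assume i: "i \<in> {..d}"
    have "char_box S (n - d) \<subseteq> char_box S (n - i)" using i by (intro char_box_mono) auto
    then have "real (card (char_box S n - char_box S (n - i))) \<le> E"
      unfolding E_def by (intro of_nat_mono card_mono) (auto intro: finite_char_box finite_S)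
    then have "real (card (char_box S n - char_box S (n - i))) * (2 * hmax ^ i) \<le> E * (2 * hmax ^ i)"
      by (rule mult_right_mono) (use hmax_nonneg in simp)
    moreover have "\<bar>(\<Sum>t\<leftarrow>as. t ^ i) - N * (\<integral>x. H x ^ i \<partial>M)\<bar>
        \<le> real (card (char_box S n - char_box S (n - i))) * (2 * hmax ^ i)"
      using tr[of i] d i unfolding N_def by simp
    ultimately have "\<bar>(\<Sum>t\<leftarrow>as. t ^ i) - N * (\<integral>x. H x ^ i \<partial>M)\<bar> \<le> E * (2 * hmax ^ i)"
      by linarith
    then show "\<bar>a i * ((\<Sum>t\<leftarrow>as. t ^ i) - N * (\<integral>x. H x ^ i \<partial>M))\<bar> \<le> \<bar>a i\<bar> * (E * (2 * hmax ^ i))"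
      by (simp add: abs_mult mult_left_mono)
  qed
  also have "\<dots> = E * (\<Sum>i\<le>d. \<bar>a i\<bar> * (2 * hmax ^ i))"
    by (simp add: sum_distrib_left algebra_simps)
  finally show ?thesis unfolding N_def E_def .
qed

lemma integrable_polynomial_H:
  assumes "real_polynomial_function p"
  shows "integrable M (\<lambda>x. p (H x))"
proof -
  obtain a d where "p = (\<lambda>t. \<Sum>i\<le>d. a i * t ^ i)"
    using assms real_polynomial_function_iff_sum by blast
  then show ?thesis
    by (auto intro!: Bochner_Integration.integrable_sum integrable_mult_right integrable_H_power)
qed

lemma integrable_ln_H_add:
  assumes \<epsilon>: "0 < \<epsilon>"
  shows "integrable M (\<lambda>x. ln (H x + \<epsilon>))"
proof (rule integrable_continuous_bounded[where C="\<bar>ln \<epsilon>\<bar> + \<bar>ln (hmax + \<epsilon>)\<bar>"])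
  have "H x + \<epsilon> \<noteq> 0" for x using H_nonneg[of x] \<epsilon> by linarith
  then show "continuous_on UNIV (\<lambda>x. ln (H x + \<epsilon>))"
    using continuous_H by (intro continuous_intros) auto
  fix x
  have "ln \<epsilon> \<le> ln (H x + \<epsilon>)" and "ln (H x + \<epsilon>) \<le> ln (hmax + \<epsilon>)"
    using H_nonneg[of x] H_le_hmax[of x] \<epsilon> by simp_all
  then show "norm (ln (H x + \<epsilon>)) \<le> \<bar>ln \<epsilon>\<bar> + \<bar>ln (hmax + \<epsilon>)\<bar>" by auto
qed

lemma sets_H_less: "{x. H x < \<delta>} \<in> sets M"
proof -
  have "open {x. H x < \<delta>}"
    by (rule open_Collect_less) (use continuous_H in \<open>auto intro: continuous_intros\<close>)
  then show ?thesis using sets_eq by simp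
qed

lemma ln_mult_integral_le_polynomial_approx:
  assumes \<epsilon>: "0 < \<epsilon>" "\<epsilon> < 1"
    and p: "real_polynomial_function p" "\<And>t. t \<in> {0..hmax} \<Longrightarrow> ln (t + \<epsilon>) \<le> p t"
    and q: "real_polynomial_function q" "\<And>t. t \<in> {0..hmax} \<Longrightarrow> 0 \<le> q t" "1 \<le> q 0"
  obtains K where "0 \<le> K"
    and "\<And>\<theta>. 0 < \<theta> \<Longrightarrow> ln \<epsilon> * (\<integral>x. q (H x) \<partial>M) \<le> (\<integral>x. p (H x) \<partial>M) + \<theta> * K"
proof -
  obtain ap dp where p_eq: "p = (\<lambda>t. \<Sum>i\<le>dp. ap i * t ^ i)"
    using p(1) real_polynomial_function_iff_sum by blast
  obtain aq dq where q_eq: "q = (\<lambda>t. \<Sum>i\<le>dq. aq i * t ^ i)"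
    using q(1) real_polynomial_function_iff_sum by blast
  define Kp where "Kp = (\<Sum>i\<le>dp. \<bar>ap i\<bar> * (2 * hmax ^ i))"
  define Kq where "Kq = (\<Sum>i\<le>dq. \<bar>aq i\<bar> * (2 * hmax ^ i))"
  have Kp: "0 \<le> Kp" and Kq: "0 \<le> Kq"
    unfolding Kp_def Kq_def using hmax_nonneg by (auto intro!: sum_nonneg)
  have ln_neg: "ln \<epsilon> < 0" using \<epsilon> by simp
  then have "ln \<epsilon> * Kq \<le> 0" using Kq by (simp add: mult_nonpos_nonneg)
  then have K: "0 \<le> Kp - ln \<epsilon> * Kq" using Kp by linarith
  have "ln \<epsilon> * (\<integral>x. q (H x) \<partial>M) \<le> (\<integral>x. p (H x) \<partial>M) + \<theta> * (Kp - ln \<epsilon> * Kq)"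
    if \<theta>: "0 < \<theta>" for \<theta>
  proof -
    obtain n where n: "max dp dq \<le> n" and folner:
      "real (card (char_box S n - char_box S (n - max dp dq))) \<le> \<theta> * real (card (char_box S n))"
      using char_box_folner[OF finite_S \<theta>] by blast
    define N where "N = real (card (char_box S n))"
    have "0 < card (char_box S n)"
      using finite_char_box[OF finite_S] one_in_char_box card_gt_0_iff by blast
    then have "0 < N" unfolding N_def by simp
    have small: "real (card (char_box S n - char_box S (n - d))) \<le> \<theta> * N" if "d \<le> max dp dq" for d
    proof -
      have "char_box S (n - max dp dq) \<subseteq> char_box S (n - d)" using that by (intro char_box_mono) auto
      then have "card (char_box S n - char_box S (n - d)) \<le> card (char_box S n - char_box S (n - max dp dq))"
        by (intro card_mono) (auto intro: finite_char_box finite_S)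
      then show ?thesis using folner unfolding N_def by linarith
    qed
    obtain as :: "real list" where "length as = card (char_box S n)"
      and bnd: "\<forall>a \<in> set as. 0 \<le> a \<and> a \<le> hmax"
      and prod: "1 \<le> prod_list (filter (\<lambda>a. a \<noteq> 0) as)"
      and tr: "\<And>k. k \<le> n \<Longrightarrow> \<bar>(\<Sum>a\<leftarrow>as. a ^ k) - real (card (char_box S n)) * (\<integral>x. H x ^ k \<partial>M)\<bar>
          \<le> real (card (char_box S n - char_box S (n - k))) * (2 * hmax ^ k)"
      using toeplitz_spectrum[of n] by metis
    have "\<bar>(\<Sum>a\<leftarrow>as. p a) - N * (\<integral>x. p (H x) \<partial>M)\<bar> \<le> \<theta> * N * Kp"
      using sum_list_polynomial_approx[OF tr, of dp ap] n small[of dp] Kp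
      unfolding p_eq Kp_def N_def by (auto intro: order_trans mult_right_mono)
    moreover have "\<bar>(\<Sum>a\<leftarrow>as. q a) - N * (\<integral>x. q (H x) \<partial>M)\<bar> \<le> \<theta> * N * Kq"
      using sum_list_polynomial_approx[OF tr, of dq aq] n small[of dq] Kq
      unfolding q_eq Kq_def N_def by (auto intro: order_trans mult_right_mono)
    ultimately have "ln \<epsilon> * (N * (\<integral>x. q (H x) \<partial>M) + \<theta> * N * Kq) \<le> ln \<epsilon> * (\<Sum>a\<leftarrow>as. q a)"
      and "(\<Sum>a\<leftarrow>as. p a) \<le> N * (\<integral>x. p (H x) \<partial>M) + \<theta> * N * Kp"
      using ln_neg by (auto intro!: mult_left_mono_neg simp: abs_le_iff)
    moreover have "ln \<epsilon> * (\<Sum>a\<leftarrow>as. q a) \<le> (\<Sum>a\<leftarrow>as. p a)"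
      by (rule ln_mult_sum_list_le[where p = p and q = q, OF bnd prod \<epsilon> p(2) q(2,3)])
    ultimately have "N * (ln \<epsilon> * (\<integral>x. q (H x) \<partial>M)) \<le> N * ((\<integral>x. p (H x) \<partial>M) + \<theta> * (Kp - ln \<epsilon> * Kq))"
      by (simp add: algebra_simps; linarith)
    then show ?thesis using \<open>0 < N\<close> by simp
  qed
  with K show ?thesis by (rule that)
qed

lemma ln_mult_integral_le_polynomial:
  assumes \<epsilon>: "0 < \<epsilon>" "\<epsilon> < 1"
    and p: "real_polynomial_function p" "\<And>t. t \<in> {0..hmax} \<Longrightarrow> ln (t + \<epsilon>) \<le> p t"
    and q: "real_polynomial_function q" "\<And>t. t \<in> {0..hmax} \<Longrightarrow> 0 \<le> q t" "1 \<le> q 0"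
  shows "ln \<epsilon> * (\<integral>x. q (H x) \<partial>M) \<le> (\<integral>x. p (H x) \<partial>M)"
proof (rule field_le_epsilon)
  obtain K where K: "0 \<le> K"
    and approx: "\<And>\<theta>. 0 < \<theta> \<Longrightarrow> ln \<epsilon> * (\<integral>x. q (H x) \<partial>M) \<le> (\<integral>x. p (H x) \<partial>M) + \<theta> * K"
    using ln_mult_integral_le_polynomial_approx[OF assms] by blast
  fix e :: real assume e: "0 < e"
  have "e / (K + 1) * K \<le> e" using K e by (simp add: field_simps)
  with approx[of "e / (K + 1)"] K e
  show "ln \<epsilon> * (\<integral>x. q (H x) \<partial>M) \<le> (\<integral>x. p (H x) \<partial>M) + e" by simp
qed
end

lemma polynomial_upper_approx:
  fixes g :: "real \<Rightarrow> real"
  assumes g: "continuous_on {a..b} g" and \<eta>: "0 < \<eta>"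
  obtains p where "real_polynomial_function p"
    and "\<And>t. t \<in> {a..b} \<Longrightarrow> g t \<le> p t" and "\<And>t. t \<in> {a..b} \<Longrightarrow> p t \<le> g t + \<eta>"
proof -
  obtain p0 where p0: "real_polynomial_function p0" "\<And>t. t \<in> {a..b} \<Longrightarrow> \<bar>g t - p0 t\<bar> < \<eta> / 2"
    using Stone_Weierstrass_real_polynomial_function[OF compact_Icc g, of "\<eta> / 2"] \<eta> by auto
  show ?thesis
  proof (rule that[of "\<lambda>t. p0 t + \<eta> / 2"])
    show "real_polynomial_function (\<lambda>t. p0 t + \<eta> / 2)" using p0(1) by auto
    show "g t \<le> p0 t + \<eta> / 2" "p0 t + \<eta> / 2 \<le> g t + \<eta>" if "t \<in> {a..b}" for t
      using p0(2)[OF that] unfolding abs_less_iff by linarith+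
  qed
qed

lemma (in finite_measure) exists_small_sublevel:
  fixes g :: "'a \<Rightarrow> real"
  assumes g: "g \<in> borel_measurable M" and nonneg: "\<And>x. x \<in> space M \<Longrightarrow> 0 \<le> g x"
    and null: "emeasure M {x \<in> space M. g x = 0} = 0" and \<tau>: "0 < \<tau>"
  obtains \<delta> where "0 < \<delta>" and "measure M {x \<in> space M. g x < \<delta>} < \<tau>"
proof -
  define A where "A m = {x \<in> space M. g x < 1 / real (Suc m)}" for m
  have "range A \<subseteq> sets M" unfolding A_def using g by auto
  moreover have "decseq A"
    unfolding A_def decseq_def by (auto simp: frac_le elim!: less_le_trans)
  ultimately have "(\<lambda>m. measure M (A m)) \<longlonglongrightarrow> measure M (\<Inter>m. A m)"
    by (rule finite_Lim_measure_decseq)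
  moreover have "(\<Inter>m. A m) = {x \<in> space M. g x = 0}"
  proof (intro equalityI subsetI)
    fix x assume x: "x \<in> (\<Inter>m. A m)"
    have "\<not> 0 < g x"
    proof
      assume "0 < g x"
      then obtain m where "inverse (real (Suc m)) < g x" using reals_Archimedean by blast
      moreover have "g x < 1 / real (Suc m)" using x unfolding A_def by blast
      ultimately show False by (simp add: inverse_eq_divide)
    qed
    with x nonneg show "x \<in> {x \<in> space M. g x = 0}" unfolding A_def by force
  qed (auto simp: A_def)
  moreover have "measure M {x \<in> space M. g x = 0} = 0"
    using null by (simp add: measure_def)
  ultimately have "(\<lambda>m. measure M (A m)) \<longlonglongrightarrow> 0" by simp
  from order_tendstoD(2)[OF this \<tau>] obtain m where "measure M (A m) < \<tau>"
    by (auto simp: eventually_sequentially)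
  then show ?thesis using that[of "1 / real (Suc m)"] unfolding A_def by simp
qed

context haar_int_char_poly
begin

lemma integral_ln_H_add_ge:
  assumes \<epsilon>: "0 < \<epsilon>" "\<epsilon> < 1" and \<delta>: "0 < \<delta>" and \<eta>: "0 < \<eta>"
  shows "ln \<epsilon> * (measure M {x. H x < \<delta>} + 2 * \<eta>) - 2 * \<eta> \<le> (\<integral>x. ln (H x + \<epsilon>) \<partial>M)"
proof -
  have ln_neg: "ln \<epsilon> < 0" using \<epsilon> by simp
  have "continuous_on {0..hmax} (\<lambda>t. ln (t + \<epsilon>))" using \<epsilon> by (intro continuous_intros) auto
  then obtain p where p_poly: "real_polynomial_function p"
    and p_bounds: "\<And>t. t \<in> {0..hmax} \<Longrightarrow> ln (t + \<epsilon>) \<le> p t"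
      "\<And>t. t \<in> {0..hmax} \<Longrightarrow> p t \<le> ln (t + \<epsilon>) + 2 * \<eta>"
    using polynomial_upper_approx[of 0 hmax _ "2 * \<eta>"] \<eta> by auto
  define g where "g t = max 0 (1 - t / \<delta>)" for t :: real
  have "continuous_on {0..hmax} g" unfolding g_def using \<delta> by (intro continuous_intros) auto
  then obtain q where q_poly: "real_polynomial_function q"
    and q_bounds: "\<And>t. t \<in> {0..hmax} \<Longrightarrow> g t \<le> q t" "\<And>t. t \<in> {0..hmax} \<Longrightarrow> q t \<le> g t + 2 * \<eta>"
    using polynomial_upper_approx[of 0 hmax _ "2 * \<eta>"] \<eta> by auto
  have H_range: "H x \<in> {0..hmax}" for x using H_nonneg H_le_hmax by simp
  have "ln \<epsilon> * (\<integral>x. q (H x) \<partial>M) \<le> (\<integral>x. p (H x) \<partial>M)"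
  proof (rule ln_mult_integral_le_polynomial[OF \<epsilon> p_poly _ q_poly])
    show "ln (t + \<epsilon>) \<le> p t" if "t \<in> {0..hmax}" for t using p_bounds(1)[OF that] .
    show "0 \<le> q t" if "t \<in> {0..hmax}" for t
      using q_bounds(1)[OF that] unfolding g_def by linarith
    show "1 \<le> q 0" using q_bounds(1)[of 0] hmax_nonneg unfolding g_def by simp
  qed
  also have "\<dots> \<le> (\<integral>x. ln (H x + \<epsilon>) + 2 * \<eta> \<partial>M)"
    using p_bounds(2)[OF H_range] integrable_ln_H_add[OF \<epsilon>(1)] integrable_polynomial_H
      p_poly
    by (intro integral_mono) auto
  also have "\<dots> = (\<integral>x. ln (H x + \<epsilon>) \<partial>M) + 2 * \<eta>"
    using integrable_ln_H_add[OF \<epsilon>(1)] prob_space by simp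
  finally have upper: "ln \<epsilon> * (\<integral>x. q (H x) \<partial>M) \<le> (\<integral>x. ln (H x + \<epsilon>) \<partial>M) + 2 * \<eta>" .
  have g_ind: "g (H x) \<le> indicator {x. H x < \<delta>} x" for x
    using H_nonneg[of x] \<delta> unfolding g_def by (auto simp: indicator_def)
  have "q (H x) \<le> indicator {x. H x < \<delta>} x + 2 * \<eta>" for x
    using q_bounds(2)[OF H_range, of x] g_ind[of x] by linarith
  then have "(\<integral>x. q (H x) \<partial>M) \<le> (\<integral>x. indicator {x. H x < \<delta>} x + 2 * \<eta> \<partial>M)"
    using integrable_polynomial_H[OF q_poly] sets_H_less
    by (intro integral_mono) (auto intro!: integrable_real_indicator simp: less_top[symmetric])
  also have "\<dots> = measure M {x. H x < \<delta>} + 2 * \<eta>"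
    using sets_H_less prob_space
    by (subst Bochner_Integration.integral_add) (auto intro!: integrable_real_indicator simp: less_top[symmetric])
  finally have "ln \<epsilon> * (measure M {x. H x < \<delta>} + 2 * \<eta>) \<le> ln \<epsilon> * (\<integral>x. q (H x) \<partial>M)"
    using ln_neg by (intro mult_left_mono_neg) auto
  with upper show ?thesis by linarith
qed

lemma integral_ln_H_add_nonneg:
  assumes null: "emeasure M {x. F x = 0} = 0" and \<epsilon>: "0 < \<epsilon>" "\<epsilon> < 1"
  shows "0 \<le> (\<integral>x. ln (H x + \<epsilon>) \<partial>M)"
proof (rule field_le_epsilon)
  fix e :: real assume e: "0 < e"
  have ln_neg: "ln \<epsilon> < 0" using \<epsilon> by simp
  define \<tau> where "\<tau> = e / (2 - 3 * ln \<epsilon>)"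
  have \<tau>: "0 < \<tau>" unfolding \<tau>_def using e ln_neg by simp
  have "{x. H x = 0} = {x. F x = 0}" unfolding H_def by simp
  then obtain \<delta> where \<delta>: "0 < \<delta>" and small: "measure M {x. H x < \<delta>} < \<tau>"
    using exists_small_sublevel[of H \<tau>] continuous_measurable[OF continuous_H] H_nonneg null \<tau> by auto
  have "ln \<epsilon> * (3 * \<tau>) \<le> ln \<epsilon> * (measure M {x. H x < \<delta>} + 2 * \<tau>)"
    using small ln_neg by (intro mult_left_mono_neg) auto
  moreover have "(2 - 3 * ln \<epsilon>) * \<tau> = e"
    unfolding \<tau>_def using ln_neg by simp
  then have "ln \<epsilon> * (3 * \<tau>) - 2 * \<tau> = - e"
    by (simp add: algebra_simps)
  ultimately show "0 \<le> (\<integral>x. ln (H x + \<epsilon>) \<partial>M) + e"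
    using integral_ln_H_add_ge[OF \<epsilon> \<delta> \<tau>] by linarith
qed

end

section \<open>From regularized logarithms to the Mahler measure\<close>

lemma ln_sq_add_pos_part_le:
  fixes t \<epsilon> :: real
  assumes t: "0 \<le> t" and \<epsilon>: "0 < \<epsilon>"
  shows "max 0 (ln (t\<^sup>2 + \<epsilon>) / 2) \<le> max 0 (ln t) + \<epsilon> / 2"
proof -
  have ln1: "ln (1 + \<epsilon>) \<le> \<epsilon>" using \<epsilon> by (intro ln_add_one_self_le_self) simp
  have pos: "0 < t\<^sup>2 + \<epsilon>" using \<epsilon> by (simp add: add_nonneg_pos)
  show ?thesis
  proof (cases "t < 1")
    case True
    then have "t\<^sup>2 \<le> 1" using t by (simp add: power_le_one)
    then have "ln (t\<^sup>2 + \<epsilon>) \<le> ln (1 + \<epsilon>)" using pos by simp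
    then show ?thesis using ln1 \<epsilon> by simp
  next
    case False
    then have "\<epsilon> \<le> t\<^sup>2 * \<epsilon>" using \<epsilon> by (simp add: one_le_power)
    then have "ln (t\<^sup>2 + \<epsilon>) \<le> ln (t\<^sup>2 * (1 + \<epsilon>))" using pos by (simp add: algebra_simps)
    also have "\<dots> = 2 * ln t + ln (1 + \<epsilon>)" using False \<epsilon> by (simp add: ln_mult ln_realpow)
    moreover have "0 \<le> ln t" using False by simp
    ultimately show ?thesis using ln1 \<epsilon> by simp
  qed
qed

lemma neg_ln_le_SUP_regularized:
  fixes t :: real
  assumes t: "0 \<le> t"
  shows "(if t = 0 then \<infinity> else ennreal (max 0 (- ln t)))
    \<le> (SUP m. ennreal (max 0 (- ln (t\<^sup>2 + 1 / real (m + 2)) / 2)))"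
proof (rule dense_le)
  fix y assume y: "y < (if t = 0 then \<infinity> else ennreal (max 0 (- ln t)))"
  obtain r where r: "0 \<le> r" "y = ennreal r"
    using y by (cases y rule: ennreal_cases) auto
  have "t\<^sup>2 < exp (- 2 * r)"
  proof (cases "t = 0")
    case False
    then have "r < - ln t" using y r t by (simp add: ennreal_less_iff)
    then have "ln t < ln (exp (- r))" by simp
    then have "t < exp (- r)" using t False by (subst (asm) ln_less_cancel_iff) auto
    then have "t\<^sup>2 < exp (- r) ^ 2" using t by (intro power_strict_mono) auto
    also have "exp (- r) ^ 2 = exp (- 2 * r)" by (simp add: exp_double[symmetric])
    finally show ?thesis .
  qed simp
  then obtain m where "inverse (real (Suc m)) < exp (- 2 * r) - t\<^sup>2"
    using reals_Archimedean[of "exp (- 2 * r) - t\<^sup>2"] by auto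
  moreover have "1 / real (m + 2) \<le> inverse (real (Suc m))"
    by (simp add: inverse_eq_divide frac_le)
  ultimately have "t\<^sup>2 + 1 / real (m + 2) < exp (- 2 * r)" by linarith
  moreover have "0 < t\<^sup>2 + 1 / real (m + 2)" by (simp add: add_nonneg_pos)
  ultimately have "ln (t\<^sup>2 + 1 / real (m + 2)) < ln (exp (- 2 * r))"
    by (subst ln_less_cancel_iff) auto
  then have "y < ennreal (max 0 (- ln (t\<^sup>2 + 1 / real (m + 2)) / 2))"
    using r by (simp add: ennreal_less_iff)
  also have "\<dots> \<le> (SUP m. ennreal (max 0 (- ln (t\<^sup>2 + 1 / real (m + 2)) / 2)))"
    by (rule SUP_upper) simp
  finally show "y \<le> \<dots>" by simp
qed

lemma nn_integral_neg_part_le_pos_part: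
  fixes f :: "'a \<Rightarrow> real"
  assumes f: "integrable M f" and nonneg: "0 \<le> (\<integral>x. f x \<partial>M)"
  shows "(\<integral>\<^sup>+x. ennreal (max 0 (- f x)) \<partial>M) \<le> (\<integral>\<^sup>+x. ennreal (max 0 (f x)) \<partial>M)"
proof -
  have neg: "integrable M (\<lambda>x. max 0 (- f x))" and pos: "integrable M (\<lambda>x. max 0 (f x))"
    using f by auto
  have "(\<integral>x. max 0 (f x) \<partial>M) - (\<integral>x. max 0 (- f x) \<partial>M) = (\<integral>x. max 0 (f x) - max 0 (- f x) \<partial>M)"
    using neg pos by simp
  also have "\<dots> = (\<integral>x. f x \<partial>M)" by (intro Bochner_Integration.integral_cong) auto
  finally have "(\<integral>x. max 0 (- f x) \<partial>M) \<le> (\<integral>x. max 0 (f x) \<partial>M)"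
    using nonneg by simp
  then show ?thesis
    using nn_integral_eq_integral[OF neg] nn_integral_eq_integral[OF pos] by (simp add: ennreal_leI)
qed

context prob_space
begin

lemma nn_integral_neg_part_ln_regularized_le:
  fixes u :: "'a \<Rightarrow> complex"
  assumes u [measurable]: "u \<in> borel_measurable M" and bound: "\<And>x. cmod (u x) \<le> B"
    and \<epsilon>: "0 < \<epsilon>" and reg: "0 \<le> (\<integral>x. ln ((cmod (u x))\<^sup>2 + \<epsilon>) \<partial>M)"
  shows "(\<integral>\<^sup>+x. ennreal (max 0 (- ln ((cmod (u x))\<^sup>2 + \<epsilon>) / 2)) \<partial>M)
    \<le> (\<integral>\<^sup>+x. ennreal (max 0 (ln (cmod (u x)))) \<partial>M) + ennreal (\<epsilon> / 2)"
proof -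
  define L where "L x = ln ((cmod (u x))\<^sup>2 + \<epsilon>) / 2" for x
  have int_L: "integrable M L"
  proof (rule integrable_const_bound[where B="\<bar>ln \<epsilon>\<bar> + \<bar>ln (B\<^sup>2 + \<epsilon>)\<bar>"])
    show "AE x in M. norm (L x) \<le> \<bar>ln \<epsilon>\<bar> + \<bar>ln (B\<^sup>2 + \<epsilon>)\<bar>"
    proof (intro AE_I2)
      fix x
      have "ln \<epsilon> \<le> ln ((cmod (u x))\<^sup>2 + \<epsilon>)" "ln ((cmod (u x))\<^sup>2 + \<epsilon>) \<le> ln (B\<^sup>2 + \<epsilon>)"
        using \<epsilon> bound[of x] by (auto intro!: power_mono simp: add_nonneg_pos)
      then show "norm (L x) \<le> \<bar>ln \<epsilon>\<bar> + \<bar>ln (B\<^sup>2 + \<epsilon>)\<bar>"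
        unfolding L_def by (auto split: abs_split)
    qed
  qed (unfold L_def, measurable)
  have pointwise: "ennreal (max 0 (L x)) \<le> ennreal (max 0 (ln (cmod (u x)))) + ennreal (\<epsilon> / 2)" for x
  proof -
    have "ennreal (max 0 (L x)) \<le> ennreal (max 0 (ln (cmod (u x))) + \<epsilon> / 2)"
      using ln_sq_add_pos_part_le[OF norm_ge_zero \<epsilon>, of "u x"] unfolding L_def by (rule ennreal_leI)
    also have "\<dots> = ennreal (max 0 (ln (cmod (u x)))) + ennreal (\<epsilon> / 2)"
      using \<epsilon> by (simp add: ennreal_plus)
    finally show ?thesis .
  qed
  have "(\<integral>\<^sup>+x. ennreal (max 0 (- L x)) \<partial>M) \<le> (\<integral>\<^sup>+x. ennreal (max 0 (L x)) \<partial>M)"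
    using nn_integral_neg_part_le_pos_part[OF int_L] reg by (simp add: L_def)
  also have "\<dots> \<le> (\<integral>\<^sup>+x. ennreal (max 0 (ln (cmod (u x)))) + ennreal (\<epsilon> / 2) \<partial>M)"
    using pointwise by (rule nn_integral_mono)
  also have "\<dots> = (\<integral>\<^sup>+x. ennreal (max 0 (ln (cmod (u x)))) \<partial>M) + ennreal (\<epsilon> / 2)"
    by (simp add: nn_integral_add emeasure_space_1)
  finally show ?thesis by (simp add: L_def)
qed

text \<open>Monotone convergence along \<open>\<epsilon> = 1 / (m + 2)\<close>: the negative parts of
  \<open>ln (\<bar>u\<bar>\<^sup>2 + \<epsilon>) / 2\<close> increase to that of \<open>ln \<bar>u\<bar>\<close> (with \<open>\<infinity>\<close> on the zeros of \<open>u\<close>).\<close>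

lemma nn_integral_neg_ln_le_pos_ln:
  fixes u :: "'a \<Rightarrow> complex"
  assumes u [measurable]: "u \<in> borel_measurable M" and bound: "\<And>x. cmod (u x) \<le> B"
    and reg: "\<And>\<epsilon>. 0 < \<epsilon> \<Longrightarrow> \<epsilon> < 1 \<Longrightarrow> 0 \<le> (\<integral>x. ln ((cmod (u x))\<^sup>2 + \<epsilon>) \<partial>M)"
  shows "(\<integral>\<^sup>+x. (if u x = 0 then \<infinity> else ennreal (max 0 (- ln (cmod (u x))))) \<partial>M)
    \<le> (\<integral>\<^sup>+x. ennreal (max 0 (ln (cmod (u x)))) \<partial>M)"
proof -
  define \<epsilon> where "\<epsilon> m = 1 / real (m + 2)" for m :: nat
  define Neg where "Neg m x = ennreal (max 0 (- ln ((cmod (u x))\<^sup>2 + \<epsilon> m) / 2))" for m x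
  define Pos where "Pos = (\<integral>\<^sup>+x. ennreal (max 0 (ln (cmod (u x)))) \<partial>M)"
  have \<epsilon>: "0 < \<epsilon> m" "\<epsilon> m < 1" for m unfolding \<epsilon>_def by auto
  have Neg_le: "(\<integral>\<^sup>+x. Neg m x \<partial>M) \<le> Pos + ennreal (\<epsilon> m / 2)" for m
    unfolding Neg_def Pos_def using nn_integral_neg_part_ln_regularized_le[OF u bound \<epsilon>(1) reg[OF \<epsilon>]] .
  have inc: "incseq Neg"
  proof (intro incseq_SucI le_funI)
    fix m x
    have "\<epsilon> (Suc m) \<le> \<epsilon> m" unfolding \<epsilon>_def by (simp add: frac_le)
    then have "ln ((cmod (u x))\<^sup>2 + \<epsilon> (Suc m)) \<le> ln ((cmod (u x))\<^sup>2 + \<epsilon> m)"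
      using \<epsilon>[of "Suc m"] by (simp add: add_nonneg_pos)
    then show "Neg m x \<le> Neg (Suc m) x" unfolding Neg_def by (intro ennreal_leI) simp
  qed
  have "(\<integral>\<^sup>+x. (if u x = 0 then \<infinity> else ennreal (max 0 (- ln (cmod (u x))))) \<partial>M)
      \<le> (\<integral>\<^sup>+x. (SUP m. Neg m x) \<partial>M)"
  proof (rule nn_integral_mono)
    fix x
    show "(if u x = 0 then \<infinity> else ennreal (max 0 (- ln (cmod (u x))))) \<le> (SUP m. Neg m x)"
      using neg_ln_le_SUP_regularized[OF norm_ge_zero[of "u x"]] unfolding Neg_def \<epsilon>_def by simp
  qed
  also have "\<dots> = (SUP m. \<integral>\<^sup>+x. Neg m x \<partial>M)"
    by (rule nn_integral_monotone_convergence_SUP[OF inc]) (unfold Neg_def, measurable)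
  also have "\<dots> \<le> Pos"
  proof (rule SUP_least, rule ennreal_le_epsilon)
    fix m and e :: real assume e: "0 < e"
    obtain k where k: "inverse (real (Suc k)) < e" using reals_Archimedean[OF e] by blast
    have "\<epsilon> (m + k) \<le> inverse (real (Suc k))" unfolding \<epsilon>_def by (simp add: inverse_eq_divide frac_le)
    have "(\<integral>\<^sup>+x. Neg m x \<partial>M) \<le> (\<integral>\<^sup>+x. Neg (m + k) x \<partial>M)"
      using inc by (intro nn_integral_mono) (auto simp: incseq_def le_fun_def)
    also have "\<dots> \<le> Pos + ennreal (\<epsilon> (m + k) / 2)" by (rule Neg_le)
    also have "\<dots> \<le> Pos + ennreal e"
      using \<open>\<epsilon> (m + k) \<le> inverse (real (Suc k))\<close> k \<epsilon>[of "m + k"] by (intro add_left_mono ennreal_leI) simp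
    finally show "(\<integral>\<^sup>+x. Neg m x \<partial>M) \<le> Pos + ennreal e" .
  qed
  finally show ?thesis unfolding Pos_def .
qed

lemma mahler_m_nonneg_of_regularized:
  fixes u :: "'a \<Rightarrow> complex"
  assumes u: "u \<in> borel_measurable M" and bound: "\<And>x. cmod (u x) \<le> B"
    and reg: "\<And>\<epsilon>. 0 < \<epsilon> \<Longrightarrow> \<epsilon> < 1 \<Longrightarrow> 0 \<le> (\<integral>x. ln ((cmod (u x))\<^sup>2 + \<epsilon>) \<partial>M)"
  shows "0 \<le> mahler_m M u"
proof -
  define Pos where "Pos = (\<integral>\<^sup>+x. ennreal (max 0 (ln (cmod (u x)))) \<partial>M)"
  define Neg where "Neg = (\<integral>\<^sup>+x. (if u x = 0 then \<infinity> else ennreal (max 0 (- ln (cmod (u x))))) \<partial>M)"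
  have "(if u x = 0 then 0 else ennreal (max 0 (ln (cmod (u x))))) = ennreal (max 0 (ln (cmod (u x))))" for x
    by simp
  then have "mahler_m M u = enn2ereal Pos - enn2ereal Neg"
    unfolding mahler_m_def Pos_def Neg_def by presburger
  moreover have "Pos \<le> ennreal B"
  proof -
    have "0 \<le> B" using order_trans[OF norm_ge_zero bound] .
    then have "max 0 (ln (cmod (u x))) \<le> B" for x
      using ln_le_minus_one[of "cmod (u x)"] bound[of x] by (cases "u x = 0") auto
    then have "Pos \<le> (\<integral>\<^sup>+x. ennreal B \<partial>M)"
      unfolding Pos_def by (intro nn_integral_mono ennreal_leI)
    then show ?thesis by (simp add: emeasure_space_1)
  qed
  moreover have "Neg \<le> Pos"
    unfolding Pos_def Neg_def by (rule nn_integral_neg_ln_le_pos_ln[OF u bound reg])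
  ultimately show ?thesis
    by (cases Pos rule: ennreal_cases; cases Neg rule: ennreal_cases) (auto simp: ennreal_le_iff top_unique)
qed

end

theorem lemma2p1:
  fixes M :: "'a::{topological_ab_group_add, t2_space} measure"
    and f :: "'a \<Rightarrow> complex"
  assumes "compact (UNIV :: 'a set)"
    and "normalized_haar M"
    and "int_char_poly f"
    and "emeasure M {x. f x = 0} = 0"
  shows "mahler_m M f \<ge> 0"
proof -
  obtain S c where S: "finite S" "\<forall>ch \<in> S. character ch"
    and f: "f = (\<lambda>x. \<Sum>ch\<in>S. of_int (c ch) * ch x)"
    using assms(3) unfolding int_char_poly_def by blast
  interpret haar_int_char_poly M S c
    using assms(2) S by unfold_locales auto
  have f_eq: "f = F" unfolding F_def f ..
  have "0 \<le> (\<integral>x. ln ((cmod (F x))\<^sup>2 + \<epsilon>) \<partial>M)" if "0 < \<epsilon>" "\<epsilon> < 1" for \<epsilon>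
    using integral_ln_H_add_nonneg[OF _ that] assms(4) unfolding f_eq H_def by simp
  then show ?thesis
    unfolding f_eq by (rule mahler_m_nonneg_of_regularized[OF measurable_F norm_F_le])
qed

end
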